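(* Let $B=(A,\mathcal R)$ be a blueprint, $\sim$ a congruence on $B$, and $i:B\to B_{\mathbb Z}$ the canonical map. Then $$I_{\mathbb Z}(\sim)=\Big\{\textstyle\sum_k i(c_k)-\sum_k i(d_k)\ :\ c_k,d_k\in B,\ c_k\sim d_k\text{ for all }k\Big\}$$ is an ideal of the ring $B_{\mathbb Z}$, and $(B/\sim)_{\mathbb Z}\cong B_{\mathbb Z}/I_{\mathbb Z}(\sim)$ canonically (compatibly with the maps from $\mathbb Z[A]$). If $\sim=\sim_I$ for an ideal $I$ of $B$, then $$I_{\mathbb Z}(\sim_I)=\Big\{\textstyle\sum_k i(c_k)-\sum_k i(d_k)\ :\ c_k,d_k\in I\Big\}.$$
   Context: A monoid is a commutative semigroup $A$, written multiplicatively, with neutral element $1$. For a monoid $A$, $\mathbb N[A]$ denotes the semiring of finite formal sums $\sum a_i$ of elements $a_i\in A$ (repetitions allowed), with empty sum $\underline0$ and multiplication extended bilinearly from $A$. A pre-addition on $A$ is a relation $\mathcal R\subseteq\mathbb N[A]\times\mathbb N[A]$, written $\sum a_i\equiv\sum b_j$, which is an equivalence relation and satisfies: if $\sum a_i\equiv\sum b_j$ and $\sum c_k\equiv\sum d_l$, then $\sum a_i+\sum c_k\equiv\sum b_j+\sum d_l$ and $\sum_{i,k}a_ic_k\equiv\sum_{j,l}b_jd_l$. A blueprint $B=(A,\mathcal R)$ is a monoid $A$ with a pre-addition $\mathcal R$; we write $a\in B$ for $a\in A$. An element $e$ with $e\equiv\underline0$ is a zero of $B$. $B_{\mathbb Z}$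 is the ring $\mathbb Z[A]/\mathcal I(\mathcal R)$, where $\mathbb Z[A]$ is the monoid ring and $\mathcal I(\mathcal R)=\{\sum a_i-\sum b_j:\sum a_i\equiv\sum b_j\}$ (an ideal); $i:B\to B_{\mathbb Z}$ is induced by $A\to\mathbb Z[A]$. For an equivalence relation $\sim$ on $A$, its linear extension $\sim_{\mathbb N}$ is the equivalence relation on $\mathbb N[A]$ generated by $\sum_{i=1}^n a_i\sim_{\mathbb N}\sum_{i=1}^n b_i$ whenever $a_i\sim b_i$ for all $i$; $\sim_{\mathcal R}$ is the smallest equivalence relation on $\mathbb N[A]$ containing $\mathcal R$ and $\sim_{\mathbb N}$. A congruence on $B$ is an equivalence relation $\sim$ on $A$ such that (C1) $\sim_{\mathbb N}$ is a pre-addition on $A$, and (C2) the restriction of $\sim_{\mathcal R}$ to $A$ equals $\sim$. The quotient $B/\sim$ has monoid $A/\sim$ and the smallest pre-addition containing all $\sum[a_i]\equiv\sum[b_j]$ with $\sum a_i\equiv\sum b_j$ in $B$. For a subset $I\subseteq B$, $a\sim^I b$ iff $a=b$ or $a,b\in I$; and $a\sim_I b$ iff there is a finite sequence $a\equiv\sum_k c_{1,k}\sim^I_{\mathbb N}\sum_k d_{1,k}\equiv\cdots\sim^I_{\mathbb N}\sum_k d_{n,k}\equiv b$ with $c_{i,k},d_{i,k}\in A$. An ideal of $B$ is a subset $I$ with (I1) $IB\subseteq I$; (I2) every zero of $B$ lies in $I$; (I3) if $a\sim_I b$ and $b\in I$ then $a\in I$. For an ideal $I$ containing all absorbing elements (elements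 $e$ with $eb\equiv e$ for all $b$), $\sim_I$ is a congruence. *)

theory Defs
  imports "HOL-Library.Multiset" "HOL-Algebra.Algebra"
begin

text \<open>Blueprints. The monoid A is a commutative HOL-Algebra monoid M (with carrier).
  N[A] is rendered as finite multisets over carrier M; formal sums are multisets.\<close>

definition NA :: "('a,'b) monoid_scheme \<Rightarrow> 'a multiset set" where
  "NA M = {Z. set_mset Z \<subseteq> carrier M}"

definition mset_mult :: "('a,'b) monoid_scheme \<Rightarrow> 'a multiset \<Rightarrow> 'a multiset \<Rightarrow> 'a multiset" where
  "mset_mult M Xa Ya = (\<Sum>x\<in>#Xa. image_mset (\<lambda>y. x \<otimes>\<^bsub>M\<^esub> y) Ya)"

definition pre_addition :: "('a,'b) monoid_scheme \<Rightarrow> ('a multiset \<times> 'a multiset) set \<Rightarrow> bool" where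
  "pre_addition M R \<longleftrightarrow> equiv (NA M) R \<and>
     (\<forall>Xa Ya Z W. (Xa,Ya) \<in> R \<longrightarrow> (Z,W) \<in> R \<longrightarrow>
        (Xa + Z, Ya + W) \<in> R \<and> (mset_mult M Xa Z, mset_mult M Ya W) \<in> R)"

definition blueprint :: "('a,'b) monoid_scheme \<Rightarrow> ('a multiset \<times> 'a multiset) set \<Rightarrow> bool" where
  "blueprint M R \<longleftrightarrow> comm_monoid M \<and> pre_addition M R"

definition equiv_gen :: "'x set \<Rightarrow> ('x \<times> 'x) set \<Rightarrow> ('x \<times> 'x) set" where
  "equiv_gen U G = \<Inter>{S. equiv U S \<and> G \<subseteq> S}"

definition lin_ext :: "('a,'b) monoid_scheme \<Rightarrow> ('a \<times> 'a) set \<Rightarrow> ('a multiset \<times> 'a multiset) set" where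
  "lin_ext M r = equiv_gen (NA M)
     {(mset xs, mset ys) | xs ys. set xs \<subseteq> carrier M \<and> set ys \<subseteq> carrier M \<and>
                                 list_all2 (\<lambda>a b. (a,b) \<in> r) xs ys}"

definition sim_R :: "('a,'b) monoid_scheme \<Rightarrow> ('a multiset \<times> 'a multiset) set \<Rightarrow> ('a \<times> 'a) set
    \<Rightarrow> ('a multiset \<times> 'a multiset) set" where
  "sim_R M R r = equiv_gen (NA M) (R \<union> lin_ext M r)"

definition bp_congruence :: "('a,'b) monoid_scheme \<Rightarrow> ('a multiset \<times> 'a multiset) set \<Rightarrow> ('a \<times> 'a) set \<Rightarrow> bool" where
  "bp_congruence M R r \<longleftrightarrow> equiv (carrier M) r \<and>
     pre_addition M (lin_ext M r) \<and>
     {(a,b). a \<in> carrier M \<and> b \<in> carrier M \<and> ({#a#},{#b#}) \<in> sim_R M R r} = r"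

definition quot_monoid :: "('a,'b) monoid_scheme \<Rightarrow> ('a \<times> 'a) set \<Rightarrow> 'a set monoid" where
  "quot_monoid M r = \<lparr> carrier = carrier M // r,
     Group.monoid.mult = (\<lambda>P Q. r `` ((\<lambda>(x,y). x \<otimes>\<^bsub>M\<^esub> y) ` (P \<times> Q))),
     one = r `` {\<one>\<^bsub>M\<^esub>} \<rparr>"

definition quot_preadd :: "('a,'b) monoid_scheme \<Rightarrow> ('a multiset \<times> 'a multiset) set \<Rightarrow> ('a \<times> 'a) set
    \<Rightarrow> ('a set multiset \<times> 'a set multiset) set" where
  "quot_preadd M R r = \<Inter>{S. pre_addition (quot_monoid M r) S \<and>
      {(image_mset (\<lambda>a. r `` {a}) Xa, image_mset (\<lambda>a. r `` {a}) Ya) | Xa Ya. (Xa,Ya) \<in> R} \<subseteq> S}"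

text \<open>The monoid ring Z[A]: finitely supported integer functions on carrier M.\<close>
definition Zring :: "('a,'b) monoid_scheme \<Rightarrow> ('a \<Rightarrow> int) ring" where
  "Zring M = \<lparr> carrier = {f. finite {x. f x \<noteq> 0} \<and> {x. f x \<noteq> 0} \<subseteq> carrier M},
     Group.monoid.mult = (\<lambda>f g x. \<Sum>p\<in>{(a,b). f a \<noteq> 0 \<and> g b \<noteq> 0 \<and> a \<otimes>\<^bsub>M\<^esub> b = x}. f (fst p) * g (snd p)),
     one = (\<lambda>x. if x = \<one>\<^bsub>M\<^esub> then 1 else 0),
     ring.zero = (\<lambda>x. 0),
     ring.add = (\<lambda>f g x. f x + g x) \<rparr>"

definition ms_int :: "'a multiset \<Rightarrow> 'a \<Rightarrow> int" where
  "ms_int Xa = (\<lambda>x. int (count Xa x))"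

definition IR :: "('a multiset \<times> 'a multiset) set \<Rightarrow> ('a \<Rightarrow> int) set" where
  "IR R = {(\<lambda>x. ms_int Xa x - ms_int Ya x) | Xa Ya. (Xa,Ya) \<in> R}"

definition BZ :: "('a,'b) monoid_scheme \<Rightarrow> ('a multiset \<times> 'a multiset) set \<Rightarrow> ('a \<Rightarrow> int) set ring" where
  "BZ M R = Zring M Quot IR R"

definition piZ :: "('a,'b) monoid_scheme \<Rightarrow> ('a multiset \<times> 'a multiset) set \<Rightarrow> ('a \<Rightarrow> int) \<Rightarrow> ('a \<Rightarrow> int) set" where
  "piZ M R f = IR R +>\<^bsub>Zring M\<^esub> f"

definition iZ :: "('a,'b) monoid_scheme \<Rightarrow> ('a multiset \<times> 'a multiset) set \<Rightarrow> 'a \<Rightarrow> ('a \<Rightarrow> int) set" where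
  "iZ M R a = piZ M R (\<lambda>x. if x = a then 1 else 0)"

definition IZ :: "('a,'b) monoid_scheme \<Rightarrow> ('a multiset \<times> 'a multiset) set \<Rightarrow> ('a \<times> 'a) set
    \<Rightarrow> ('a \<Rightarrow> int) set set" where
  "IZ M R r = {(\<Oplus>\<^bsub>BZ M R\<^esub> k\<in>{..<n}. iZ M R (c k)) \<ominus>\<^bsub>BZ M R\<^esub> (\<Oplus>\<^bsub>BZ M R\<^esub> k\<in>{..<n}. iZ M R (d k))
     | (n::nat) c d. \<forall>k<n. c k \<in> carrier M \<and> d k \<in> carrier M \<and> (c k, d k) \<in> r}"

text \<open>The map Z[A] -> Z[A/r] induced by A -> A/r.\<close>
definition zpush :: "('a,'b) monoid_scheme \<Rightarrow> ('a \<times> 'a) set \<Rightarrow> ('a \<Rightarrow> int) \<Rightarrow> 'a set \<Rightarrow> int" where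
  "zpush M r f = (\<lambda>P. if P \<in> carrier M // r then (\<Sum>x\<in>{x\<in>P. f x \<noteq> 0}. f x) else 0)"

definition sim_up :: "'a set \<Rightarrow> 'a set \<Rightarrow> ('a \<times> 'a) set" where
  "sim_up U I = {(a,b). a \<in> U \<and> b \<in> U \<and> (a = b \<or> (a \<in> I \<and> b \<in> I))}"

definition sim_low :: "('a,'b) monoid_scheme \<Rightarrow> ('a multiset \<times> 'a multiset) set \<Rightarrow> 'a set \<Rightarrow> ('a \<times> 'a) set" where
  "sim_low M R I = {(a,b). a \<in> carrier M \<and> b \<in> carrier M \<and>
      ({#a#},{#b#}) \<in> (R O lin_ext M (sim_up (carrier M) I))\<^sup>+ O R}"

definition bp_ideal :: "('a,'b) monoid_scheme \<Rightarrow> ('a multiset \<times> 'a multiset) set \<Rightarrow> 'a set \<Rightarrow> bool" where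
  "bp_ideal M R I \<longleftrightarrow> I \<subseteq> carrier M \<and>
     (\<forall>x\<in>I. \<forall>b\<in>carrier M. x \<otimes>\<^bsub>M\<^esub> b \<in> I) \<and>
     (\<forall>e\<in>carrier M. ({#e#}, {#}) \<in> R \<longrightarrow> e \<in> I) \<and>
     (\<forall>a b. (a,b) \<in> sim_low M R I \<longrightarrow> b \<in> I \<longrightarrow> a \<in> I)"

end

theory Submission
  imports Defs
begin

(* Notation: Z[A] is the monoid ring (Zring), i : Z[A] -> B_Z = Z[A]/I(R) the projection (piZ),
   and q : Z[A] -> Z[A/~] the ring map induced by the class map A -> A/~ (zpush).
   The basic tool is that every element of Z[A] is a formal difference of two formal sums
   (ms_diff), which turns statements about Z[A] into statements about multisets.

   For a congruence ~ this identifies I_Z(~) with i(ker q), hence an ideal.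
   The quotient pre-addition satisfies I(R/~) = q(I(R)) = q(ker i), so both B_Z/I_Z(~) and
   (B/~)_Z are quotients of Z[A] by ker i + ker q, which gives the canonical isomorphism.
   Finally, for ~ = ~_I every relation x ~_I y has x - y in D_I + I(R), where D_I consists of
   the termwise differences of elements of I; this yields the description of I_Z(~_I). *)

lemma (in abelian_group) additive_subgroup_by_closure:
  assumes "H \<subseteq> carrier G" "\<zero> \<in> H"
    and "\<And>a b. a \<in> H \<Longrightarrow> b \<in> H \<Longrightarrow> a \<oplus> b \<in> H" and "\<And>a. a \<in> H \<Longrightarrow> \<ominus> a \<in> H"
  shows "additive_subgroup H G"
  by (rule additive_subgroupI, rule add.subgroupI) (use assms in \<open>auto simp: a_inv_def\<close>)

lemma (in ring) ideal_by_closure: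
  assumes "additive_subgroup I R"
    and "\<And>a x. a \<in> I \<Longrightarrow> x \<in> carrier R \<Longrightarrow> x \<otimes> a \<in> I"
    and "\<And>a x. a \<in> I \<Longrightarrow> x \<in> carrier R \<Longrightarrow> a \<otimes> x \<in> I"
  shows "ideal I R"
  by (rule idealI[OF ring_axioms]) (use assms in \<open>auto simp: additive_subgroup_def\<close>)

lemma (in cring) diff_mult_diff:
  "\<lbrakk>a \<in> carrier R; b \<in> carrier R; c \<in> carrier R; d \<in> carrier R\<rbrakk> \<Longrightarrow>
    (a \<ominus> b) \<otimes> (c \<ominus> d) = (a \<otimes> c \<oplus> b \<otimes> d) \<ominus> (a \<otimes> d \<oplus> b \<otimes> c)"
  by algebra

lemma (in cring) mult_diff_split:
  "\<lbrakk>a \<in> carrier R; b \<in> carrier R; c \<in> carrier R; d \<in> carrier R\<rbrakk> \<Longrightarrow>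
    a \<otimes> c \<ominus> b \<otimes> d = (a \<ominus> b) \<otimes> c \<oplus> b \<otimes> (c \<ominus> d)"
  by algebra

lemma (in ring) rcos_eq_zero_iff:
  assumes "ideal I R" "x \<in> carrier R"
  shows "I +> x = \<zero>\<^bsub>R Quot I\<^esub> \<longleftrightarrow> x \<in> I"
proof -
  interpret ideal I R by fact
  show ?thesis using rcos_const_imp_mem[OF assms(2)] a_rcos_zero[OF assms(1)]
    by (auto simp: FactRing_def)
qed

lemma (in ring_hom_ring) ideal_image:
  assumes surj: "h ` carrier R = carrier S" and I: "ideal I R"
  shows "ideal (h ` I) S"
proof -
  interpret I: ideal I R by (rule I)
  have sub: "additive_subgroup (h ` I) S"
    by (rule additive_subgroupI[OF img_is_add_subgroup[OF I.a_subgroup]])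
  show ?thesis
  proof (rule S.ideal_by_closure[OF sub])
    fix a s assume "a \<in> h ` I" "s \<in> carrier S"
    then obtain x y where "x \<in> I" "a = h x" "y \<in> carrier R" "s = h y"
      using surj by (metis image_iff)
    moreover have "x \<in> carrier R" using \<open>x \<in> I\<close> by (rule I.Icarr)
    ultimately have "s \<otimes>\<^bsub>S\<^esub> a = h (y \<otimes> x)" "a \<otimes>\<^bsub>S\<^esub> s = h (x \<otimes> y)" by simp_all
    moreover have "y \<otimes> x \<in> I" "x \<otimes> y \<in> I"
      using \<open>x \<in> I\<close> \<open>y \<in> carrier R\<close> by (auto intro: I.I_l_closed I.I_r_closed)
    ultimately show "s \<otimes>\<^bsub>S\<^esub> a \<in> h ` I" "a \<otimes>\<^bsub>S\<^esub> s \<in> h ` I" by (simp_all only: imageI)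
  qed
qed

lemma (in ring_hom_ring) hom_minus:
  "x \<in> carrier R \<Longrightarrow> y \<in> carrier R \<Longrightarrow> h (x \<ominus> y) = h x \<ominus>\<^bsub>S\<^esub> h y"
  by (simp add: R.minus_eq S.minus_eq)

text \<open>For two homomorphisms out of the same ring, \<open>h x \<in> h(ker h')\<close> implies \<open>h' x \<in> h'(ker h)\<close>:
  if \<open>h x = h k\<close> with \<open>h' k = 0\<close>, then \<open>x - k \<in> ker h\<close> and \<open>h'(x - k) = h' x\<close>.\<close>

lemma kernel_image_transfer:
  assumes h: "ring_hom_ring R S h" and h': "ring_hom_ring R S' h'" and x: "x \<in> carrier R"
    and "h x \<in> h ` a_kernel R S' h'"
  shows "h' x \<in> h' ` a_kernel R S h"
proof -
  interpret h: ring_hom_ring R S h by (rule h)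
  interpret h': ring_hom_ring R S' h' by (rule h')
  obtain k where "k \<in> a_kernel R S' h'" and hk: "h x = h k" using assms(4) by blast
  then have k: "k \<in> carrier R" "h' k = \<zero>\<^bsub>S'\<^esub>" "h x = h k" unfolding a_kernel_def' by simp_all
  let ?d = "x \<ominus>\<^bsub>R\<^esub> k"
  have "h ?d = \<zero>\<^bsub>S\<^esub>" using x k by (simp add: h.hom_minus)
  then have "?d \<in> a_kernel R S h" unfolding a_kernel_def' using x k(1) by simp
  moreover have "h' ?d = h' x" using x k by (simp add: h'.hom_minus h'.S.minus_eq)
  ultimately show ?thesis by (metis image_eqI)
qed

text \<open>Two surjective homomorphisms out of \<open>R\<close> with the same kernel have isomorphic targets,
  compatibly with the homomorphisms: both targets are isomorphic to \<open>R/ker\<close>.\<close>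

lemma iso_of_equal_kernels:
  assumes h: "ring_hom_ring R S h" and h': "ring_hom_ring R S' h'"
    and surj: "h ` carrier R = carrier S" and surj': "h' ` carrier R = carrier S'"
    and ker: "a_kernel R S h = a_kernel R S' h'"
  shows "\<exists>\<phi>. \<phi> \<in> ring_iso S' S \<and> (\<forall>x\<in>carrier R. \<phi> (h' x) = h x)"
proof -
  interpret h: ring_hom_ring R S h by (rule h)
  interpret h': ring_hom_ring R S' h' by (rule h')
  let ?K = "a_kernel R S h"
  let ?Q = "R Quot ?K"
  define \<psi> where "\<psi> = (\<lambda>U. the_elem (h ` U))"
  define \<psi>' where "\<psi>' = (\<lambda>U. the_elem (h' ` U))"
  have iso: "\<psi> \<in> ring_iso ?Q S" unfolding \<psi>_def by (rule h.FactRing_iso_set[OF surj])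
  have iso': "\<psi>' \<in> ring_iso ?Q S'" unfolding \<psi>'_def ker by (rule h'.FactRing_iso_set[OF surj'])
  have Q: "ring ?Q" by (rule ideal.quotient_is_ring[OF h.kernel_is_ideal])
  define \<phi> where "\<phi> = \<psi> \<circ> inv_into (carrier ?Q) \<psi>'"
  have "\<phi> \<in> ring_iso S' S"
    unfolding \<phi>_def by (rule ring_iso_set_trans[OF ring_iso_set_sym[OF Q iso'] iso])
  moreover have "\<phi> (h' x) = h x" if x: "x \<in> carrier R" for x
  proof -
    have cos: "?K +>\<^bsub>R\<^esub> x \<in> carrier ?Q" using x by (auto simp: FactRing_def A_RCOSETS_def')
    have "\<psi>' (?K +>\<^bsub>R\<^esub> x) = h' x" unfolding \<psi>'_def ker using x by simp
    then have "inv_into (carrier ?Q) \<psi>' (h' x) = ?K +>\<^bsub>R\<^esub> x"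
      using cos iso' by (metis bij_betw_imp_inj_on inv_into_f_f ring_iso_memE(5))
    then show ?thesis unfolding \<phi>_def \<psi>_def using x by simp
  qed
  ultimately show ?thesis by blast
qed

lemma ring_hom_ring_comp:
  assumes "ring_hom_ring R S h" "ring_hom_ring S T g"
  shows "ring_hom_ring R T (g \<circ> h)"
  using assms
  by (intro ring_hom_ringI2 ring_hom_trans[of h R S g T])
    (simp_all add: ring_hom_ring_def ring_hom_ring_axioms_def)

lemma rcos_surj: "(+>\<^bsub>R\<^esub>) I ` carrier R = carrier (R Quot I)"
  by (auto simp: FactRing_def A_RCOSETS_def')

lemma mem_set_add: "x \<in> A <+>\<^bsub>G\<^esub> B \<longleftrightarrow> (\<exists>a\<in>A. \<exists>b\<in>B. x = a \<oplus>\<^bsub>G\<^esub> b)"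
  by (auto simp: set_add_def')

lemma equiv_gen_least: "equiv U S \<Longrightarrow> G \<subseteq> S \<Longrightarrow> equiv_gen U G \<subseteq> S"
  by (auto simp: equiv_gen_def)

lemma equiv_gen_base: "G \<subseteq> equiv_gen U G"
  by (auto simp: equiv_gen_def)

section \<open>The monoid ring\<close>

lemma Zring_carrier: "carrier (Zring M) = {f. finite {x. f x \<noteq> 0} \<and> {x. f x \<noteq> 0} \<subseteq> carrier M}"
  by (simp add: Zring_def)

lemma Zring_add: "f \<oplus>\<^bsub>Zring M\<^esub> g = (\<lambda>x. f x + g x)"
  by (simp add: Zring_def)

lemma Zring_zero: "\<zero>\<^bsub>Zring M\<^esub> = (\<lambda>x. 0)"
  by (simp add: Zring_def)

lemma Zring_one: "\<one>\<^bsub>Zring M\<^esub> = (\<lambda>x. if x = \<one>\<^bsub>M\<^esub> then 1 else 0)"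
  by (simp add: Zring_def)

lemma Zring_mult_eq:
  assumes "finite S" "finite T" "{x. f x \<noteq> 0} \<subseteq> S" "{x. g x \<noteq> 0} \<subseteq> T"
  shows "f \<otimes>\<^bsub>Zring M\<^esub> g = (\<lambda>x. \<Sum>a\<in>S. \<Sum>b\<in>T. if a \<otimes>\<^bsub>M\<^esub> b = x then f a * g b else 0)"
proof
  fix x
  let ?Q = "{(a,b). f a \<noteq> 0 \<and> g b \<noteq> 0 \<and> a \<otimes>\<^bsub>M\<^esub> b = x}"
  have "(\<Sum>a\<in>S. \<Sum>b\<in>T. if a \<otimes>\<^bsub>M\<^esub> b = x then f a * g b else 0)
     = (\<Sum>p\<in>S \<times> T. if fst p \<otimes>\<^bsub>M\<^esub> snd p = x then f (fst p) * g (snd p) else 0)"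
    by (simp add: sum.cartesian_product case_prod_beta)
  also have "\<dots> = (\<Sum>p\<in>?Q. if fst p \<otimes>\<^bsub>M\<^esub> snd p = x then f (fst p) * g (snd p) else 0)"
    by (rule sum.mono_neutral_right) (use assms in auto)
  also have "\<dots> = (\<Sum>p\<in>?Q. f (fst p) * g (snd p))"
    by (rule sum.cong) auto
  finally show "(f \<otimes>\<^bsub>Zring M\<^esub> g) x = (\<Sum>a\<in>S. \<Sum>b\<in>T. if a \<otimes>\<^bsub>M\<^esub> b = x then f a * g b else 0)"
    by (simp add: Zring_def)
qed

lemma Zring_mult_supp:
  "{x. (f \<otimes>\<^bsub>Zring M\<^esub> g) x \<noteq> 0} \<subseteq> (\<lambda>(a,b). a \<otimes>\<^bsub>M\<^esub> b) ` ({x. f x \<noteq> 0} \<times> {x. g x \<noteq> 0})"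
proof
  fix x assume "x \<in> {x. (f \<otimes>\<^bsub>Zring M\<^esub> g) x \<noteq> 0}"
  then have "{(a,b). f a \<noteq> 0 \<and> g b \<noteq> 0 \<and> a \<otimes>\<^bsub>M\<^esub> b = x} \<noteq> {}"
    by (auto simp: Zring_def simp del: Collect_empty_eq)
  then show "x \<in> (\<lambda>(a,b). a \<otimes>\<^bsub>M\<^esub> b) ` ({x. f x \<noteq> 0} \<times> {x. g x \<noteq> 0})" by blast
qed

lemma sum_collapse:
  fixes F :: "'a \<Rightarrow> 'b \<Rightarrow> 'c::comm_semiring_0"
  assumes "finite V" "\<And>a b. a \<in> S \<Longrightarrow> b \<in> T \<Longrightarrow> m a b \<in> V"
  shows "(\<Sum>y\<in>V. G y * (\<Sum>a\<in>S. \<Sum>b\<in>T. if m a b = y then F a b else 0))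
       = (\<Sum>a\<in>S. \<Sum>b\<in>T. G (m a b) * F a b)"
proof -
  have "(\<Sum>y\<in>V. G y * (\<Sum>a\<in>S. \<Sum>b\<in>T. if m a b = y then F a b else 0))
      = (\<Sum>y\<in>V. \<Sum>a\<in>S. \<Sum>b\<in>T. if m a b = y then G y * F a b else 0)"
    by (simp add: sum_distrib_left if_distrib cong: if_cong)
  also have "\<dots> = (\<Sum>a\<in>S. \<Sum>b\<in>T. \<Sum>y\<in>V. if m a b = y then G y * F a b else 0)"
    by (subst sum.swap) (rule sum.cong[OF refl], rule sum.swap)
  also have "\<dots> = (\<Sum>a\<in>S. \<Sum>b\<in>T. G (m a b) * F a b)"
    using assms by simp
  finally show ?thesis .
qed

lemma (in comm_monoid) Zring_mult_closed:
  assumes "f \<in> carrier (Zring G)" "g \<in> carrier (Zring G)"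
  shows "f \<otimes>\<^bsub>Zring G\<^esub> g \<in> carrier (Zring G)"
proof -
  let ?V = "(\<lambda>(a,b). a \<otimes> b) ` ({x. f x \<noteq> 0} \<times> {x. g x \<noteq> 0})"
  have "finite ?V" "?V \<subseteq> carrier G" using assms by (auto simp: Zring_carrier)
  then show ?thesis
    using Zring_mult_supp[where f=f and g=g and M=G] by (auto simp: Zring_carrier intro: finite_subset)
qed

lemma (in comm_monoid) Zring_mult_comm:
  assumes "f \<in> carrier (Zring G)" "g \<in> carrier (Zring G)"
  shows "f \<otimes>\<^bsub>Zring G\<^esub> g = g \<otimes>\<^bsub>Zring G\<^esub> f"
proof -
  define S where "S = {x. f x \<noteq> 0}"
  define T where "T = {x. g x \<noteq> 0}"
  have fin: "finite S" "finite T" and sub: "S \<subseteq> carrier G" "T \<subseteq> carrier G"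
    using assms by (auto simp: Zring_carrier S_def T_def)
  have "f \<otimes>\<^bsub>Zring G\<^esub> g = (\<lambda>x. \<Sum>a\<in>S. \<Sum>b\<in>T. if a \<otimes> b = x then f a * g b else 0)"
    by (rule Zring_mult_eq) (use fin in \<open>auto simp: S_def T_def\<close>)
  also have "\<dots> = (\<lambda>x. \<Sum>b\<in>T. \<Sum>a\<in>S. if b \<otimes> a = x then g b * f a else 0)"
    by (subst sum.swap) (use sub in \<open>auto simp: m_comm mult.commute subset_iff intro!: sum.cong\<close>)
  also have "\<dots> = g \<otimes>\<^bsub>Zring G\<^esub> f"
    by (rule Zring_mult_eq[symmetric]) (use fin in \<open>auto simp: S_def T_def\<close>)
  finally show ?thesis .
qed

text \<open>The product \<open>(fg)h\<close> is the triple convolution sum; associativity follows by comparing it with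
  the same expansion of \<open>(gh)f = f(gh)\<close>.\<close>

lemma (in comm_monoid) Zring_mult_triple:
  assumes "f \<in> carrier (Zring G)" "g \<in> carrier (Zring G)" "h \<in> carrier (Zring G)"
  shows "((f \<otimes>\<^bsub>Zring G\<^esub> g) \<otimes>\<^bsub>Zring G\<^esub> h) x
    = (\<Sum>a\<in>{x. f x \<noteq> 0}. \<Sum>b\<in>{x. g x \<noteq> 0}. \<Sum>c\<in>{x. h x \<noteq> 0}.
         if a \<otimes> b \<otimes> c = x then f a * g b * h c else 0)"
proof -
  define S where "S = {x. f x \<noteq> 0}"
  define T where "T = {x. g x \<noteq> 0}"
  define U where "U = {x. h x \<noteq> 0}"
  define V where "V = (\<lambda>(a,b). a \<otimes> b) ` (S \<times> T)"
  have fin: "finite S" "finite T" "finite U" "finite V"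
    using assms by (auto simp: Zring_carrier S_def T_def U_def V_def)
  have fg: "f \<otimes>\<^bsub>Zring G\<^esub> g = (\<lambda>y. \<Sum>a\<in>S. \<Sum>b\<in>T. if a \<otimes> b = y then f a * g b else 0)"
    by (rule Zring_mult_eq) (use fin in \<open>auto simp: S_def T_def\<close>)
  have "((f \<otimes>\<^bsub>Zring G\<^esub> g) \<otimes>\<^bsub>Zring G\<^esub> h) x
      = (\<Sum>y\<in>V. \<Sum>c\<in>U. if y \<otimes> c = x then (f \<otimes>\<^bsub>Zring G\<^esub> g) y * h c else 0)"
    by (subst Zring_mult_eq[OF fin(4,3)])
       (use Zring_mult_supp[where f=f and g=g and M=G] in \<open>auto simp: U_def V_def S_def T_def\<close>)
  also have "\<dots> = (\<Sum>y\<in>V. (\<Sum>c\<in>U. if y \<otimes> c = x then h c else 0) * (f \<otimes>\<^bsub>Zring G\<^esub> g) y)"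
    by (auto simp: sum_distrib_right intro!: sum.cong)
  also have "\<dots> = (\<Sum>a\<in>S. \<Sum>b\<in>T. (\<Sum>c\<in>U. if a \<otimes> b \<otimes> c = x then h c else 0) * (f a * g b))"
    unfolding fg by (rule sum_collapse[OF fin(4)]) (auto simp: V_def)
  also have "\<dots> = (\<Sum>a\<in>S. \<Sum>b\<in>T. \<Sum>c\<in>U. if a \<otimes> b \<otimes> c = x then f a * g b * h c else 0)"
    by (auto simp: sum_distrib_left sum_distrib_right mult_ac intro!: sum.cong)
  finally show ?thesis by (simp add: S_def T_def U_def)
qed

lemma (in comm_monoid) Zring_mult_assoc:
  assumes f: "f \<in> carrier (Zring G)" and g: "g \<in> carrier (Zring G)" and h: "h \<in> carrier (Zring G)"
  shows "(f \<otimes>\<^bsub>Zring G\<^esub> g) \<otimes>\<^bsub>Zring G\<^esub> h = f \<otimes>\<^bsub>Zring G\<^esub> (g \<otimes>\<^bsub>Zring G\<^esub> h)"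
proof
  fix x
  define S where "S = {x. f x \<noteq> 0}"
  define T where "T = {x. g x \<noteq> 0}"
  define U where "U = {x. h x \<noteq> 0}"
  have sub: "S \<subseteq> carrier G" "T \<subseteq> carrier G" "U \<subseteq> carrier G"
    using f g h by (auto simp: Zring_carrier S_def T_def U_def)
  have "(f \<otimes>\<^bsub>Zring G\<^esub> (g \<otimes>\<^bsub>Zring G\<^esub> h)) x = ((g \<otimes>\<^bsub>Zring G\<^esub> h) \<otimes>\<^bsub>Zring G\<^esub> f) x"
    by (simp add: Zring_mult_comm Zring_mult_closed f g h)
  also have "\<dots> = (\<Sum>b\<in>T. \<Sum>c\<in>U. \<Sum>a\<in>S. if b \<otimes> c \<otimes> a = x then g b * h c * f a else 0)"
    by (simp add: Zring_mult_triple g h f S_def T_def U_def)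
  also have "\<dots> = (\<Sum>a\<in>S. \<Sum>b\<in>T. \<Sum>c\<in>U. if a \<otimes> b \<otimes> c = x then f a * g b * h c else 0)"
  proof -
    have "(\<Sum>b\<in>T. \<Sum>c\<in>U. \<Sum>a\<in>S. if b \<otimes> c \<otimes> a = x then g b * h c * f a else 0)
        = (\<Sum>a\<in>S. \<Sum>b\<in>T. \<Sum>c\<in>U. if b \<otimes> c \<otimes> a = x then g b * h c * f a else 0)"
      by (simp only: sum.swap[where A=U and B=S]) (rule sum.swap)
    also have "\<dots> = (\<Sum>a\<in>S. \<Sum>b\<in>T. \<Sum>c\<in>U. if a \<otimes> b \<otimes> c = x then f a * g b * h c else 0)"
      using sub by (intro sum.cong refl) (auto simp: m_ac subset_iff mult_ac)
    finally show ?thesis .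
  qed
  finally show "((f \<otimes>\<^bsub>Zring G\<^esub> g) \<otimes>\<^bsub>Zring G\<^esub> h) x = (f \<otimes>\<^bsub>Zring G\<^esub> (g \<otimes>\<^bsub>Zring G\<^esub> h)) x"
    by (simp add: Zring_mult_triple f g h S_def T_def U_def)
qed

lemma (in comm_monoid) Zring_one_mult:
  assumes f: "f \<in> carrier (Zring G)"
  shows "\<one>\<^bsub>Zring G\<^esub> \<otimes>\<^bsub>Zring G\<^esub> f = f"
proof
  fix x
  define T where "T = {x. f x \<noteq> 0}"
  have fin: "finite T" and sub: "T \<subseteq> carrier G" using f by (auto simp: Zring_carrier T_def)
  have "(\<one>\<^bsub>Zring G\<^esub> \<otimes>\<^bsub>Zring G\<^esub> f) x
      = (\<Sum>a\<in>{\<one>}. \<Sum>b\<in>T. if a \<otimes> b = x then \<one>\<^bsub>Zring G\<^esub> a * f b else 0)"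
    by (subst Zring_mult_eq[where S="{\<one>}" and T=T]) (use fin in \<open>auto simp: T_def Zring_one\<close>)
  also have "\<dots> = (\<Sum>b\<in>T. if b = x then f b else 0)"
    using sub by (auto simp: Zring_one intro!: sum.cong)
  also have "\<dots> = f x" using fin by (simp add: T_def)
  finally show "(\<one>\<^bsub>Zring G\<^esub> \<otimes>\<^bsub>Zring G\<^esub> f) x = f x" .
qed

lemma (in comm_monoid) Zring_distrib:
  assumes f: "f \<in> carrier (Zring G)" and g: "g \<in> carrier (Zring G)" and h: "h \<in> carrier (Zring G)"
  shows "(f \<oplus>\<^bsub>Zring G\<^esub> g) \<otimes>\<^bsub>Zring G\<^esub> h = f \<otimes>\<^bsub>Zring G\<^esub> h \<oplus>\<^bsub>Zring G\<^esub> g \<otimes>\<^bsub>Zring G\<^esub> h"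
proof -
  define S where "S = {x. f x \<noteq> 0} \<union> {x. g x \<noteq> 0}"
  define T where "T = {x. h x \<noteq> 0}"
  have fin: "finite S" "finite T" using f g h by (auto simp: Zring_carrier S_def T_def)
  have expand: "k \<otimes>\<^bsub>Zring G\<^esub> h = (\<lambda>x. \<Sum>a\<in>S. \<Sum>b\<in>T. if a \<otimes> b = x then k a * h b else 0)"
    if "{x. k x \<noteq> 0} \<subseteq> S" for k
    by (rule Zring_mult_eq[OF fin that]) (simp add: T_def)
  have e1: "(\<lambda>x. f x + g x) \<otimes>\<^bsub>Zring G\<^esub> h
      = (\<lambda>x. \<Sum>a\<in>S. \<Sum>b\<in>T. if a \<otimes> b = x then (f a + g a) * h b else 0)"
    by (rule expand) (auto simp: S_def)
  have e2: "f \<otimes>\<^bsub>Zring G\<^esub> h = (\<lambda>x. \<Sum>a\<in>S. \<Sum>b\<in>T. if a \<otimes> b = x then f a * h b else 0)"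
    by (rule expand) (auto simp: S_def)
  have e3: "g \<otimes>\<^bsub>Zring G\<^esub> h = (\<lambda>x. \<Sum>a\<in>S. \<Sum>b\<in>T. if a \<otimes> b = x then g a * h b else 0)"
    by (rule expand) (auto simp: S_def)
  show ?thesis
    unfolding Zring_add e1 e2 e3
    by (simp add: sum.distrib[symmetric] distrib_right if_distrib cong: if_cong)
qed

lemma Zring_abelian_group: "abelian_group (Zring M)"
proof (rule abelian_groupI)
  fix f g assume "f \<in> carrier (Zring M)" "g \<in> carrier (Zring M)"
  moreover have "{x. f x + g x \<noteq> 0} \<subseteq> {x. f x \<noteq> 0} \<union> {x. g x \<noteq> 0}" by auto
  ultimately show "f \<oplus>\<^bsub>Zring M\<^esub> g \<in> carrier (Zring M)"
    by (auto simp: Zring_carrier Zring_add intro: finite_subset)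
next
  fix f assume "f \<in> carrier (Zring M)"
  then show "\<exists>h\<in>carrier (Zring M). h \<oplus>\<^bsub>Zring M\<^esub> f = \<zero>\<^bsub>Zring M\<^esub>"
    by (intro bexI[of _ "\<lambda>x. - f x"]) (auto simp: Zring_carrier Zring_add Zring_zero)
qed (auto simp: Zring_carrier Zring_add Zring_zero)

lemma (in comm_monoid) Zring_cring: "cring (Zring G)"
proof (rule cringI[OF Zring_abelian_group _ Zring_distrib])
  have one: "\<one>\<^bsub>Zring G\<^esub> \<in> carrier (Zring G)"
    by (auto simp: Zring_carrier Zring_one)
  show "comm_monoid (Zring G)"
    by (rule comm_monoidI)
       (use one in \<open>blast intro: Zring_mult_closed Zring_mult_assoc Zring_one_mult Zring_mult_comm\<close>)+
qed

lemma (in comm_monoid) Zring_minus: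
  assumes "f \<in> carrier (Zring G)" "g \<in> carrier (Zring G)"
  shows "f \<ominus>\<^bsub>Zring G\<^esub> g = (\<lambda>x. f x - g x)"
proof -
  interpret Z: cring "Zring G" by (rule Zring_cring)
  have "\<ominus>\<^bsub>Zring G\<^esub> g = (\<lambda>x. - g x)"
    by (rule Z.minus_equality) (use assms in \<open>auto simp: Zring_carrier Zring_add Zring_zero\<close>)
  then show ?thesis by (simp add: Z.minus_eq Zring_add)
qed

lemma ms_int_carrier: "set_mset A \<subseteq> carrier M \<Longrightarrow> ms_int A \<in> carrier (Zring M)"
proof -
  assume "set_mset A \<subseteq> carrier M"
  moreover have "{x. ms_int A x \<noteq> 0} = set_mset A" by (auto simp: ms_int_def)
  ultimately show ?thesis by (simp add: Zring_carrier)
qed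

lemma ms_int_add: "ms_int (A + B) = ms_int A \<oplus>\<^bsub>Zring M\<^esub> ms_int B"
  by (auto simp: ms_int_def Zring_add)

definition ms_diff :: "'a multiset \<Rightarrow> 'a multiset \<Rightarrow> 'a \<Rightarrow> int" where
  "ms_diff A B = (\<lambda>x. ms_int A x - ms_int B x)"

lemma IR_ms_diff: "IR R = {ms_diff A B | A B. (A,B) \<in> R}"
  by (simp add: IR_def ms_diff_def)

lemma ms_diff_carrier:
  assumes "set_mset A \<subseteq> carrier M" "set_mset B \<subseteq> carrier M"
  shows "ms_diff A B \<in> carrier (Zring M)"
proof -
  have "{x. ms_diff A B x \<noteq> 0} \<subseteq> set_mset A \<union> set_mset B"
    by (auto simp: ms_diff_def ms_int_def not_in_iff)
  then show ?thesis using assms by (auto simp: Zring_carrier intro: finite_subset)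
qed

lemma ms_diff_add: "ms_diff A B \<oplus>\<^bsub>Zring M\<^esub> ms_diff C D = ms_diff (A + C) (B + D)"
  by (auto simp: ms_diff_def ms_int_def Zring_add)

lemma ms_diff_trans: "ms_diff A B \<oplus>\<^bsub>Zring M\<^esub> ms_diff B C = ms_diff A C"
  by (auto simp: ms_diff_def Zring_add)

lemma ms_diff_self: "ms_diff A A = \<zero>\<^bsub>Zring M\<^esub>"
  by (auto simp: ms_diff_def Zring_zero)

lemma ms_diff_image_eq_zero_iff:
  "ms_diff (image_mset \<phi> A) (image_mset \<phi> B) = (\<lambda>x. 0) \<longleftrightarrow> image_mset \<phi> A = image_mset \<phi> B"
  by (auto simp: ms_diff_def ms_int_def fun_eq_iff multiset_eq_iff)

lemma (in comm_monoid) ms_diff_eq_minus: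
  assumes "set_mset A \<subseteq> carrier G" "set_mset B \<subseteq> carrier G"
  shows "ms_diff A B = ms_int A \<ominus>\<^bsub>Zring G\<^esub> ms_int B"
  using assms by (simp add: Zring_minus ms_int_carrier ms_diff_def)

lemma (in comm_monoid) ms_diff_swap:
  assumes "set_mset A \<subseteq> carrier G" "set_mset B \<subseteq> carrier G"
  shows "\<ominus>\<^bsub>Zring G\<^esub> ms_diff A B = ms_diff B A"
proof -
  interpret Z: cring "Zring G" by (rule Zring_cring)
  show ?thesis using assms
    by (simp add: ms_diff_eq_minus ms_int_carrier Z.minus_eq Z.minus_add Z.a_comm)
qed

lemma Zring_ms_diff_decomp:
  assumes f: "f \<in> carrier (Zring M)"
  obtains P N where "set_mset P \<subseteq> carrier M" "set_mset N \<subseteq> carrier M" "f = ms_diff P N"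
proof -
  define S where "S = {x. f x \<noteq> 0}"
  have fin: "finite S" and sub: "S \<subseteq> carrier M" using f by (auto simp: Zring_carrier S_def)
  define P where "P = (\<Sum>x\<in>S. replicate_mset (nat (f x)) x)"
  define N where "N = (\<Sum>x\<in>S. replicate_mset (nat (- f x)) x)"
  have cP: "count P y = (if y \<in> S then nat (f y) else 0)" for y
    using fin by (simp add: P_def count_sum)
  have cN: "count N y = (if y \<in> S then nat (- f y) else 0)" for y
    using fin by (simp add: N_def count_sum)
  have "set_mset P \<subseteq> S" "set_mset N \<subseteq> S" by (auto simp: set_mset_def cP cN split: if_splits)
  moreover have "f = ms_diff P N"
    by (auto simp: ms_diff_def ms_int_def cP cN S_def)
  ultimately show ?thesis using sub that by blast
qed

lemma ms_int_single_mult: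
  assumes "set_mset B \<subseteq> carrier M" "a \<in> carrier M"
  shows "ms_int (image_mset (\<lambda>b. a \<otimes>\<^bsub>M\<^esub> b) B) = ms_int {#a#} \<otimes>\<^bsub>Zring M\<^esub> ms_int B"
proof
  fix z
  have "(ms_int {#a#} \<otimes>\<^bsub>Zring M\<^esub> ms_int B) z
      = (\<Sum>a'\<in>{a}. \<Sum>b\<in>set_mset B. if a' \<otimes>\<^bsub>M\<^esub> b = z then ms_int {#a#} a' * ms_int B b else 0)"
    by (subst Zring_mult_eq[where S="{a}" and T="set_mset B"]) (auto simp: ms_int_def)
  also have "\<dots> = (\<Sum>b\<in>{b \<in> set_mset B. a \<otimes>\<^bsub>M\<^esub> b = z}. int (count B b))"
    unfolding ms_int_def by (simp add: sum.inter_filter cong: if_cong)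
  also have "\<dots> = ms_int (image_mset (\<lambda>b. a \<otimes>\<^bsub>M\<^esub> b) B) z"
    by (simp add: ms_int_def count_image_mset Int_def vimage_def conj_commute)
  finally show "ms_int (image_mset (\<lambda>b. a \<otimes>\<^bsub>M\<^esub> b) B) z = (ms_int {#a#} \<otimes>\<^bsub>Zring M\<^esub> ms_int B) z" ..
qed

lemma (in comm_monoid) ms_int_mult:
  assumes "set_mset A \<subseteq> carrier G" and B: "set_mset B \<subseteq> carrier G"
  shows "ms_int (mset_mult G A B) = ms_int A \<otimes>\<^bsub>Zring G\<^esub> ms_int B"
  using assms(1)
proof (induction A)
  case empty
  interpret Z: cring "Zring G" by (rule Zring_cring)
  show ?case
    using Z.l_null[OF ms_int_carrier[OF B]] by (simp add: mset_mult_def ms_int_def Zring_zero)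
next
  case (add a A)
  interpret Z: cring "Zring G" by (rule Zring_cring)
  have a: "a \<in> carrier G" and A: "set_mset A \<subseteq> carrier G" using add.prems by auto
  have "ms_int (mset_mult G (add_mset a A) B)
      = ms_int (image_mset (\<lambda>b. a \<otimes> b) B) \<oplus>\<^bsub>Zring G\<^esub> ms_int (mset_mult G A B)"
    by (simp add: mset_mult_def ms_int_add[symmetric])
  also have "\<dots> = (ms_int {#a#} \<oplus>\<^bsub>Zring G\<^esub> ms_int A) \<otimes>\<^bsub>Zring G\<^esub> ms_int B"
    using a A B by (simp add: ms_int_single_mult add.IH Z.l_distr ms_int_carrier)
  finally show ?case by (simp add: ms_int_add[symmetric])
qed

lemma (in monoid) mset_mult_carrier:
  "set_mset A \<subseteq> carrier G \<Longrightarrow> set_mset B \<subseteq> carrier G \<Longrightarrow> set_mset (mset_mult G A B) \<subseteq> carrier G"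
  by (auto simp: mset_mult_def)

lemma (in comm_monoid) ms_diff_mult:
  assumes "set_mset A \<subseteq> carrier G" "set_mset B \<subseteq> carrier G"
    "set_mset C \<subseteq> carrier G" "set_mset D \<subseteq> carrier G"
  shows "ms_diff A B \<otimes>\<^bsub>Zring G\<^esub> ms_diff C D
    = ms_diff (mset_mult G A C + mset_mult G B D) (mset_mult G A D + mset_mult G B C)"
proof -
  interpret Z: cring "Zring G" by (rule Zring_cring)
  have "ms_diff A B \<otimes>\<^bsub>Zring G\<^esub> ms_diff C D
      = (ms_int A \<ominus>\<^bsub>Zring G\<^esub> ms_int B) \<otimes>\<^bsub>Zring G\<^esub> (ms_int C \<ominus>\<^bsub>Zring G\<^esub> ms_int D)"
    using assms by (simp add: ms_diff_eq_minus)
  also have "\<dots> = (ms_int A \<otimes>\<^bsub>Zring G\<^esub> ms_int C \<oplus>\<^bsub>Zring G\<^esub> ms_int B \<otimes>\<^bsub>Zring G\<^esub> ms_int D)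
      \<ominus>\<^bsub>Zring G\<^esub> (ms_int A \<otimes>\<^bsub>Zring G\<^esub> ms_int D \<oplus>\<^bsub>Zring G\<^esub> ms_int B \<otimes>\<^bsub>Zring G\<^esub> ms_int C)"
    using assms by (intro Z.diff_mult_diff ms_int_carrier)
  also have "\<dots> = ms_diff (mset_mult G A C + mset_mult G B D) (mset_mult G A D + mset_mult G B C)"
    using assms by (simp add: ms_diff_eq_minus mset_mult_carrier ms_int_add[where M=G] ms_int_mult)
  finally show ?thesis .
qed

lemma (in comm_monoid) ms_diff_mult_split:
  assumes "set_mset A \<subseteq> carrier G" "set_mset B \<subseteq> carrier G"
    "set_mset C \<subseteq> carrier G" "set_mset D \<subseteq> carrier G"
  shows "ms_diff (mset_mult G A C) (mset_mult G B D)
    = ms_diff A B \<otimes>\<^bsub>Zring G\<^esub> ms_int C \<oplus>\<^bsub>Zring G\<^esub> ms_int B \<otimes>\<^bsub>Zring G\<^esub> ms_diff C D"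
proof -
  interpret Z: cring "Zring G" by (rule Zring_cring)
  have "ms_diff (mset_mult G A C) (mset_mult G B D)
      = ms_int A \<otimes>\<^bsub>Zring G\<^esub> ms_int C \<ominus>\<^bsub>Zring G\<^esub> ms_int B \<otimes>\<^bsub>Zring G\<^esub> ms_int D"
    using assms by (simp add: ms_diff_eq_minus mset_mult_carrier ms_int_mult)
  also have "\<dots> = (ms_int A \<ominus>\<^bsub>Zring G\<^esub> ms_int B) \<otimes>\<^bsub>Zring G\<^esub> ms_int C
      \<oplus>\<^bsub>Zring G\<^esub> ms_int B \<otimes>\<^bsub>Zring G\<^esub> (ms_int C \<ominus>\<^bsub>Zring G\<^esub> ms_int D)"
    using assms by (intro Z.mult_diff_split ms_int_carrier)
  also have "\<dots> = ms_diff A B \<otimes>\<^bsub>Zring G\<^esub> ms_int C \<oplus>\<^bsub>Zring G\<^esub> ms_int B \<otimes>\<^bsub>Zring G\<^esub> ms_diff C D"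
    using assms by (simp add: ms_diff_eq_minus)
  finally show ?thesis .
qed

definition diff_rel :: "('a,'b) monoid_scheme \<Rightarrow> ('a \<Rightarrow> int) set \<Rightarrow> ('a multiset \<times> 'a multiset) set" where
  "diff_rel M H = {(A,B). set_mset A \<subseteq> carrier M \<and> set_mset B \<subseteq> carrier M \<and> ms_diff A B \<in> H}"

lemma (in comm_monoid) diff_rel_equiv:
  assumes "additive_subgroup H (Zring G)"
  shows "equiv (NA G) (diff_rel G H)"
proof -
  interpret H: additive_subgroup H "Zring G" by fact
  show ?thesis
  proof (rule equivI)
    show "diff_rel G H \<subseteq> NA G \<times> NA G" by (auto simp: diff_rel_def NA_def)
    show "refl_on (NA G) (diff_rel G H)"
      by (auto simp: refl_on_def diff_rel_def NA_def ms_diff_self[where M=G])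
    show "sym (diff_rel G H)"
    proof (rule symI)
      fix A B assume "(A,B) \<in> diff_rel G H"
      moreover have "ms_diff B A = \<ominus>\<^bsub>Zring G\<^esub> ms_diff A B"
        if "set_mset A \<subseteq> carrier G" "set_mset B \<subseteq> carrier G"
        using ms_diff_swap[OF that] by simp
      ultimately show "(B,A) \<in> diff_rel G H" by (auto simp: diff_rel_def)
    qed
    show "trans (diff_rel G H)"
    proof (rule transI)
      fix A B C assume "(A,B) \<in> diff_rel G H" "(B,C) \<in> diff_rel G H"
      moreover have "ms_diff A C = ms_diff A B \<oplus>\<^bsub>Zring G\<^esub> ms_diff B C"
        by (rule ms_diff_trans[symmetric])
      ultimately show "(A,C) \<in> diff_rel G H" by (auto simp: diff_rel_def)
    qed
  qed
qed

lemma (in comm_monoid) diff_rel_pre_addition: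
  assumes "ideal H (Zring G)"
  shows "pre_addition G (diff_rel G H)"
  unfolding pre_addition_def
proof (intro conjI allI impI diff_rel_equiv ideal.axioms(1)[OF assms])
  interpret H: ideal H "Zring G" by fact
  fix A B C D assume AB: "(A,B) \<in> diff_rel G H" and CD: "(C,D) \<in> diff_rel G H"
  then have c: "set_mset A \<subseteq> carrier G" "set_mset B \<subseteq> carrier G"
      "set_mset C \<subseteq> carrier G" "set_mset D \<subseteq> carrier G"
    and h: "ms_diff A B \<in> H" "ms_diff C D \<in> H" by (auto simp: diff_rel_def)
  have "ms_diff (A + C) (B + D) = ms_diff A B \<oplus>\<^bsub>Zring G\<^esub> ms_diff C D"
    by (rule ms_diff_add[symmetric])
  then show "(A + C, B + D) \<in> diff_rel G H"
    using c h by (simp add: diff_rel_def)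
  have "ms_diff (mset_mult G A C) (mset_mult G B D)
      = ms_diff A B \<otimes>\<^bsub>Zring G\<^esub> ms_int C \<oplus>\<^bsub>Zring G\<^esub> ms_int B \<otimes>\<^bsub>Zring G\<^esub> ms_diff C D"
    using c by (rule ms_diff_mult_split)
  moreover have "ms_diff A B \<otimes>\<^bsub>Zring G\<^esub> ms_int C \<in> H" "ms_int B \<otimes>\<^bsub>Zring G\<^esub> ms_diff C D \<in> H"
    using h c by (auto intro: H.I_r_closed H.I_l_closed ms_int_carrier)
  ultimately show "(mset_mult G A C, mset_mult G B D) \<in> diff_rel G H"
    using c by (auto simp: diff_rel_def mset_mult_carrier)
qed

definition lin_diffs :: "('a \<Rightarrow> 'a \<Rightarrow> bool) \<Rightarrow> ('a \<Rightarrow> int) set" where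
  "lin_diffs P = {ms_diff (mset xs) (mset ys) | xs ys. list_all2 P xs ys}"

lemma ms_diff_Cons:
  "ms_diff (mset (x # xs)) (mset (y # ys)) = ms_diff {#x#} {#y#} \<oplus>\<^bsub>Zring M\<^esub> ms_diff (mset xs) (mset ys)"
  unfolding ms_diff_add by simp

lemma lin_diffs_mono: "(\<And>a b. P a b \<Longrightarrow> Q a b) \<Longrightarrow> lin_diffs P \<subseteq> lin_diffs Q"
  unfolding lin_diffs_def using list_all2_mono by blast

lemma zero_in_lin_diffs: "\<zero>\<^bsub>Zring M\<^esub> \<in> lin_diffs P"
proof -
  have "ms_diff (mset []) (mset []) \<in> lin_diffs P" unfolding lin_diffs_def by blast
  then show ?thesis by (simp only: ms_diff_self[where M=M])
qed

lemma lin_diffs_subset: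
  assumes "additive_subgroup H (Zring M)" and "\<And>x y. P x y \<Longrightarrow> ms_diff {#x#} {#y#} \<in> H"
  shows "lin_diffs P \<subseteq> H"
proof
  interpret H: additive_subgroup H "Zring M" by fact
  fix f assume "f \<in> lin_diffs P"
  then obtain xs ys where l: "list_all2 P xs ys" and f: "f = ms_diff (mset xs) (mset ys)"
    by (auto simp: lin_diffs_def)
  from l have "ms_diff (mset xs) (mset ys) \<in> H"
  proof (induction rule: list_all2_induct)
    case Nil
    then show ?case by (simp add: ms_diff_self[where M=M])
  next
    case (Cons x xs y ys)
    then show ?case
      unfolding ms_diff_Cons[where M=M] by (intro H.a_closed assms(2))
  qed
  then show "f \<in> H" by (simp add: f)
qed

lemma (in comm_monoid) lin_diffs_subgroup:
  assumes P_carrier: "\<And>x y. P x y \<Longrightarrow> x \<in> carrier G \<and> y \<in> carrier G"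
    and P_sym: "\<And>x y. P x y \<Longrightarrow> P y x"
  shows "additive_subgroup (lin_diffs P) (Zring G)"
proof -
  interpret Z: cring "Zring G" by (rule Zring_cring)
  have carr: "set_mset (mset xs) \<subseteq> carrier G \<and> set_mset (mset ys) \<subseteq> carrier G"
    if "list_all2 P xs ys" for xs ys
    using that
  proof (induction rule: list_all2_induct)
    case (Cons x xs y ys)
    then show ?case using P_carrier[OF Cons.hyps(1)] by simp
  qed simp
  show ?thesis
  proof (rule Z.additive_subgroup_by_closure)
    show "lin_diffs P \<subseteq> carrier (Zring G)"
    proof (clarsimp simp: lin_diffs_def)
      fix xs ys assume "list_all2 P xs ys"
      then show "ms_diff (mset xs) (mset ys) \<in> carrier (Zring G)"
        using carr by (intro ms_diff_carrier) auto
    qed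
    show "\<zero>\<^bsub>Zring G\<^esub> \<in> lin_diffs P" by (rule zero_in_lin_diffs)
  next
    fix a b assume "a \<in> lin_diffs P" "b \<in> lin_diffs P"
    then obtain xs ys xs' ys' where l: "list_all2 P xs ys" "list_all2 P xs' ys'"
      and ab: "a = ms_diff (mset xs) (mset ys)" "b = ms_diff (mset xs') (mset ys')"
      unfolding lin_diffs_def by blast
    have "a \<oplus>\<^bsub>Zring G\<^esub> b = ms_diff (mset (xs @ xs')) (mset (ys @ ys'))"
      unfolding ab mset_append by (rule ms_diff_add)
    moreover have "list_all2 P (xs @ xs') (ys @ ys')" using l by (rule list_all2_appendI)
    ultimately show "a \<oplus>\<^bsub>Zring G\<^esub> b \<in> lin_diffs P" unfolding lin_diffs_def by blast
  next
    fix a assume "a \<in> lin_diffs P"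
    then obtain xs ys where l: "list_all2 P xs ys" and a: "a = ms_diff (mset xs) (mset ys)"
      unfolding lin_diffs_def by blast
    have "\<ominus>\<^bsub>Zring G\<^esub> a = ms_diff (mset ys) (mset xs)"
      unfolding a using carr[OF l] by (intro ms_diff_swap) simp_all
    moreover have "list_all2 P ys xs"
      using l by (auto simp: list_all2_conv_all_nth intro: P_sym)
    ultimately show "\<ominus>\<^bsub>Zring G\<^esub> a \<in> lin_diffs P" unfolding lin_diffs_def by blast
  qed
qed

lemma (in comm_monoid) lin_ext_subset_diff_rel:
  assumes H: "additive_subgroup H (Zring G)"
    and s: "\<And>x y. (x,y) \<in> s \<Longrightarrow> x \<in> carrier G \<Longrightarrow> y \<in> carrier G \<Longrightarrow> ms_diff {#x#} {#y#} \<in> H"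
  shows "lin_ext G s \<subseteq> diff_rel G H"
  unfolding lin_ext_def
proof (rule equiv_gen_least[OF diff_rel_equiv[OF H]], clarify)
  fix xs ys assume c: "set xs \<subseteq> carrier G" "set ys \<subseteq> carrier G"
    and l: "list_all2 (\<lambda>a b. (a,b) \<in> s) xs ys"
  let ?P = "\<lambda>a b. (a,b) \<in> s \<and> a \<in> carrier G \<and> b \<in> carrier G"
  have "list_all2 ?P xs ys"
    using l c by (induction rule: list_all2_induct) auto
  then have "ms_diff (mset xs) (mset ys) \<in> lin_diffs ?P" unfolding lin_diffs_def by blast
  also have "lin_diffs ?P \<subseteq> H" by (rule lin_diffs_subset[OF H]) (simp add: s)
  finally show "(mset xs, mset ys) \<in> diff_rel G H" using c by (simp add: diff_rel_def)
qed

section \<open>Functoriality of the monoid ring\<close>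

definition zmap :: "('a \<Rightarrow> 'c) \<Rightarrow> ('a \<Rightarrow> int) \<Rightarrow> 'c \<Rightarrow> int" where
  "zmap \<phi> f = (\<lambda>y. \<Sum>x\<in>{x. f x \<noteq> 0 \<and> \<phi> x = y}. f x)"

text \<open>\<open>zmap \<phi>\<close> sends \<open>A - B\<close> to \<open>\<phi>(A) - \<phi>(B)\<close>; with the decomposition of \<open>\<int>[A]\<close> into formal
  differences this determines \<open>zmap \<phi>\<close> on all of \<open>\<int>[A]\<close>.\<close>

lemma zmap_eq:
  assumes "finite S" "{x. f x \<noteq> 0} \<subseteq> S"
  shows "zmap \<phi> f y = (\<Sum>x\<in>{x\<in>S. \<phi> x = y}. f x)"
  unfolding zmap_def using assms by (intro sum.mono_neutral_left) auto

lemma zmap_ms_diff: "zmap \<phi> (ms_diff A B) = ms_diff (image_mset \<phi> A) (image_mset \<phi> B)"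
proof
  fix y
  let ?S = "set_mset A \<union> set_mset B"
  have count: "int (count (image_mset \<phi> U) y) = (\<Sum>x\<in>{x\<in>?S. \<phi> x = y}. int (count U x))"
    if "set_mset U \<subseteq> ?S" for U
  proof -
    have "int (count (image_mset \<phi> U) y) = (\<Sum>x\<in>{x\<in>set_mset U. \<phi> x = y}. int (count U x))"
      by (simp add: count_image_mset Int_def vimage_def conj_commute)
    also have "\<dots> = (\<Sum>x\<in>{x\<in>?S. \<phi> x = y}. int (count U x))"
      using that by (intro sum.mono_neutral_left) (auto simp: not_in_iff)
    finally show ?thesis .
  qed
  have "zmap \<phi> (ms_diff A B) y = (\<Sum>x\<in>{x\<in>?S. \<phi> x = y}. ms_diff A B x)"
    by (rule zmap_eq) (auto simp: ms_diff_def ms_int_def not_in_iff)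
  also have "\<dots> = ms_diff (image_mset \<phi> A) (image_mset \<phi> B) y"
    by (simp add: ms_diff_def ms_int_def sum_subtractf count)
  finally show "zmap \<phi> (ms_diff A B) y = ms_diff (image_mset \<phi> A) (image_mset \<phi> B) y" .
qed

lemma image_mset_mset_mult:
  assumes "\<phi> \<in> hom M M'" "set_mset A \<subseteq> carrier M" "set_mset C \<subseteq> carrier M"
  shows "image_mset \<phi> (mset_mult M A C) = mset_mult M' (image_mset \<phi> A) (image_mset \<phi> C)"
  using assms(2)
proof (induction A)
  case (add a A)
  have "image_mset (\<lambda>c. \<phi> (a \<otimes>\<^bsub>M\<^esub> c)) C = image_mset (\<lambda>c. \<phi> a \<otimes>\<^bsub>M'\<^esub> \<phi> c) C"
    using add.prems assms(1,3) by (intro image_mset_cong) (auto simp: hom_def)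
  then show ?case using add by (simp add: mset_mult_def image_mset.compositionality o_def)
qed (simp add: mset_mult_def)

lemma Zring_one_ms_diff: "\<one>\<^bsub>Zring M\<^esub> = ms_diff {#\<one>\<^bsub>M\<^esub>#} {#}"
  by (auto simp: Zring_one ms_diff_def ms_int_def)

lemma zmap_ring_hom:
  assumes M: "comm_monoid M" and M': "comm_monoid M'"
    and \<phi>: "\<phi> \<in> hom M M'" and one: "\<phi> \<one>\<^bsub>M\<^esub> = \<one>\<^bsub>M'\<^esub>"
  shows "zmap \<phi> \<in> ring_hom (Zring M) (Zring M')"
proof -
  have img: "set_mset (image_mset \<phi> A) \<subseteq> carrier M'" if "set_mset A \<subseteq> carrier M" for A
    using that \<phi> by (auto simp: hom_def)
  show ?thesis
  proof (rule ring_hom_memI)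
    fix f assume "f \<in> carrier (Zring M)"
    then obtain P N where "set_mset P \<subseteq> carrier M" "set_mset N \<subseteq> carrier M" "f = ms_diff P N"
      by (rule Zring_ms_diff_decomp)
    then show "zmap \<phi> f \<in> carrier (Zring M')"
      by (auto simp: zmap_ms_diff intro!: ms_diff_carrier img)
  next
    fix f g assume "f \<in> carrier (Zring M)" "g \<in> carrier (Zring M)"
    then obtain P N C D where c: "set_mset P \<subseteq> carrier M" "set_mset N \<subseteq> carrier M"
        "set_mset C \<subseteq> carrier M" "set_mset D \<subseteq> carrier M"
      and fg: "f = ms_diff P N" "g = ms_diff C D"
      by (metis Zring_ms_diff_decomp)
    have "zmap \<phi> (f \<otimes>\<^bsub>Zring M\<^esub> g)
        = zmap \<phi> (ms_diff (mset_mult M P C + mset_mult M N D) (mset_mult M P D + mset_mult M N C))"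
      unfolding fg using c by (simp add: comm_monoid.ms_diff_mult[OF M])
    also have "\<dots> = ms_diff (image_mset \<phi> P) (image_mset \<phi> N)
        \<otimes>\<^bsub>Zring M'\<^esub> ms_diff (image_mset \<phi> C) (image_mset \<phi> D)"
      using c by (simp add: zmap_ms_diff image_mset_mset_mult[OF \<phi>]
          comm_monoid.ms_diff_mult[OF M' img img img img])
    finally show "zmap \<phi> (f \<otimes>\<^bsub>Zring M\<^esub> g) = zmap \<phi> f \<otimes>\<^bsub>Zring M'\<^esub> zmap \<phi> g"
      by (simp add: fg zmap_ms_diff)
    have "f \<oplus>\<^bsub>Zring M\<^esub> g = ms_diff (P + C) (N + D)" unfolding fg by (rule ms_diff_add)
    moreover have "zmap \<phi> f \<oplus>\<^bsub>Zring M'\<^esub> zmap \<phi> g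
        = ms_diff (image_mset \<phi> P + image_mset \<phi> C) (image_mset \<phi> N + image_mset \<phi> D)"
      unfolding fg zmap_ms_diff by (rule ms_diff_add)
    ultimately show "zmap \<phi> (f \<oplus>\<^bsub>Zring M\<^esub> g) = zmap \<phi> f \<oplus>\<^bsub>Zring M'\<^esub> zmap \<phi> g"
      by (simp add: zmap_ms_diff)
  next
    show "zmap \<phi> \<one>\<^bsub>Zring M\<^esub> = \<one>\<^bsub>Zring M'\<^esub>"
      by (simp add: Zring_one_ms_diff zmap_ms_diff one)
  qed
qed

text \<open>If \<open>\<phi>\<close> is surjective, so is \<open>zmap \<phi>\<close>: lift formal sums along a section of \<open>\<phi>\<close>.\<close>

lemma zmap_surj:
  assumes "\<phi> ` carrier M = carrier M'"
  shows "zmap \<phi> ` carrier (Zring M) = carrier (Zring M')"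
proof
  show "zmap \<phi> ` carrier (Zring M) \<subseteq> carrier (Zring M')"
  proof clarify
    fix f assume "f \<in> carrier (Zring M)"
    then obtain P N where "set_mset P \<subseteq> carrier M" "set_mset N \<subseteq> carrier M" "f = ms_diff P N"
      by (rule Zring_ms_diff_decomp)
    moreover have "set_mset (image_mset \<phi> U) \<subseteq> carrier M'" if "set_mset U \<subseteq> carrier M" for U
      using that by (auto simp flip: assms)
    ultimately show "zmap \<phi> f \<in> carrier (Zring M')"
      by (simp add: zmap_ms_diff ms_diff_carrier)
  qed
  show "carrier (Zring M') \<subseteq> zmap \<phi> ` carrier (Zring M)"
  proof
    fix g assume "g \<in> carrier (Zring M')"
    then obtain P N where P: "set_mset P \<subseteq> carrier M'" and N: "set_mset N \<subseteq> carrier M'"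
      and g: "g = ms_diff P N"
      by (rule Zring_ms_diff_decomp)
    define lift where "lift = image_mset (inv_into (carrier M) \<phi>)"
    have lift: "set_mset (lift U) \<subseteq> carrier M \<and> image_mset \<phi> (lift U) = U"
      if "set_mset U \<subseteq> carrier M'" for U
    proof
      show "set_mset (lift U) \<subseteq> carrier M"
        using that by (auto simp: lift_def assms[symmetric] intro: inv_into_into)
      have "image_mset \<phi> (lift U) = image_mset id U"
        unfolding lift_def image_mset.compositionality
        by (rule image_mset_cong) (use that in \<open>auto simp: assms[symmetric] intro: f_inv_into_f\<close>)
      then show "image_mset \<phi> (lift U) = U" by simp
    qed
    have "g = zmap \<phi> (ms_diff (lift P) (lift N))"
      by (simp add: g zmap_ms_diff lift P N)
    moreover have "ms_diff (lift P) (lift N) \<in> carrier (Zring M)"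
      using lift P N by (intro ms_diff_carrier) auto
    ultimately show "g \<in> zmap \<phi> ` carrier (Zring M)" by blast
  qed
qed

lemma image_mset_eq_lists:
  "image_mset h P = image_mset h N \<Longrightarrow>
   \<exists>xs ys. mset xs = P \<and> mset ys = N \<and> list_all2 (\<lambda>a b. h a = h b) xs ys"
proof (induction P arbitrary: N)
  case empty
  then show ?case by (intro exI[of _ "[]"]) simp
next
  case (add a P)
  have "h a \<in># image_mset h N" using add.prems by (metis image_mset_add_mset union_single_eq_member)
  then obtain b where b: "b \<in># N" "h b = h a" by auto
  define N' where "N' = N - {#b#}"
  have N: "N = add_mset b N'" using b(1) by (simp add: N'_def)
  have "image_mset h P = image_mset h N'" using add.prems b(2) by (simp add: N)
  then obtain xs ys where "mset xs = P" "mset ys = N'" "list_all2 (\<lambda>a b. h a = h b) xs ys"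
    using add.IH by blast
  then show ?case using b(2) N by (intro exI[of _ "a # xs"] exI[of _ "b # ys"]) auto
qed

lemma zmap_kernel:
  "a_kernel (Zring M) (Zring M') (zmap \<phi>)
     = lin_diffs (\<lambda>a b. a \<in> carrier M \<and> b \<in> carrier M \<and> \<phi> a = \<phi> b)"
  (is "_ = lin_diffs ?P")
proof
  show "a_kernel (Zring M) (Zring M') (zmap \<phi>) \<subseteq> lin_diffs ?P"
  proof (clarsimp simp: a_kernel_def')
    fix f assume f: "f \<in> carrier (Zring M)" and z: "zmap \<phi> f = \<zero>\<^bsub>Zring M'\<^esub>"
    obtain P N where P: "set_mset P \<subseteq> carrier M" and N: "set_mset N \<subseteq> carrier M"
      and fPN: "f = ms_diff P N"
      using f by (rule Zring_ms_diff_decomp)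
    have "image_mset \<phi> P = image_mset \<phi> N"
      using z by (simp add: fPN zmap_ms_diff Zring_zero ms_diff_image_eq_zero_iff)
    then obtain xs ys where xs: "mset xs = P" and ys: "mset ys = N"
      and l: "list_all2 (\<lambda>a b. \<phi> a = \<phi> b) xs ys"
      using image_mset_eq_lists by blast
    have "list_all2 ?P xs ys"
      using l P N by (auto simp: xs[symmetric] ys[symmetric] list_all2_conv_all_nth)
    then show "f \<in> lin_diffs ?P" unfolding lin_diffs_def fPN xs[symmetric] ys[symmetric] by blast
  qed
  show "lin_diffs ?P \<subseteq> a_kernel (Zring M) (Zring M') (zmap \<phi>)"
  proof
    fix f assume "f \<in> lin_diffs ?P"
    then obtain xs ys where l: "list_all2 ?P xs ys" and f: "f = ms_diff (mset xs) (mset ys)"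
      unfolding lin_diffs_def by blast
    from l have "set xs \<subseteq> carrier M \<and> set ys \<subseteq> carrier M"
      by (induction rule: list_all2_induct) auto
    then have "f \<in> carrier (Zring M)" unfolding f by (intro ms_diff_carrier) auto
    moreover from l have "map \<phi> xs = map \<phi> ys" by (induction rule: list_all2_induct) auto
    then have "zmap \<phi> f = \<zero>\<^bsub>Zring M'\<^esub>"
      unfolding f zmap_ms_diff by (simp add: ms_diff_self flip: mset_map)
    ultimately show "f \<in> a_kernel (Zring M) (Zring M') (zmap \<phi>)" by (simp add: a_kernel_def')
  qed
qed

section \<open>The ring \<open>B\<^sub>\<int>\<close> of a blueprint\<close>

locale blueprint_Z =
  fixes M :: "('a,'b) monoid_scheme" and R :: "('a multiset \<times> 'a multiset) set"
  assumes blueprint: "blueprint M R"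
begin

sublocale M: comm_monoid M using blueprint by (simp add: blueprint_def)

lemma R_equiv: "equiv (NA M) R"
  using blueprint by (simp add: blueprint_def pre_addition_def)

lemma R_carrier: "(A,B) \<in> R \<Longrightarrow> set_mset A \<subseteq> carrier M \<and> set_mset B \<subseteq> carrier M"
  using equiv_type[OF R_equiv] by (auto simp: NA_def)

lemma R_refl: "set_mset A \<subseteq> carrier M \<Longrightarrow> (A,A) \<in> R"
  using equiv_class_self[OF R_equiv] by (simp add: NA_def)

lemma R_sym: "(A,B) \<in> R \<Longrightarrow> (B,A) \<in> R"
  using equiv_class_eq_iff[OF R_equiv] by metis

lemma R_add_mult: "(A,B) \<in> R \<Longrightarrow> (C,D) \<in> R \<Longrightarrow>
    (A + C, B + D) \<in> R \<and> (mset_mult M A C, mset_mult M B D) \<in> R"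
  using blueprint by (simp add: blueprint_def pre_addition_def)

lemma IR_subgroup: "additive_subgroup (IR R) (Zring M)"
proof -
  interpret Z: cring "Zring M" by (rule M.Zring_cring)
  show ?thesis
  proof (rule Z.additive_subgroup_by_closure)
    show "IR R \<subseteq> carrier (Zring M)"
    proof (clarsimp simp: IR_ms_diff)
      fix A B assume "(A,B) \<in> R"
      then show "ms_diff A B \<in> carrier (Zring M)" using R_carrier by (intro ms_diff_carrier) auto
    qed
    have "ms_diff {#} {#} \<in> IR R" unfolding IR_ms_diff using R_refl[of "{#}"] by auto
    then show "\<zero>\<^bsub>Zring M\<^esub> \<in> IR R" by (simp only: ms_diff_self[where M=M])
  next
    fix a b assume "a \<in> IR R" "b \<in> IR R"
    then obtain A B C D where "(A,B) \<in> R" "(C,D) \<in> R" "a = ms_diff A B" "b = ms_diff C D"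
      unfolding IR_ms_diff by blast
    moreover have "ms_diff A B \<oplus>\<^bsub>Zring M\<^esub> ms_diff C D = ms_diff (A + C) (B + D)"
      by (rule ms_diff_add)
    ultimately show "a \<oplus>\<^bsub>Zring M\<^esub> b \<in> IR R"
      unfolding IR_ms_diff using R_add_mult by blast
  next
    fix a assume "a \<in> IR R"
    then obtain A B where AB: "(A,B) \<in> R" and a: "a = ms_diff A B" unfolding IR_ms_diff by blast
    have "\<ominus>\<^bsub>Zring M\<^esub> a = ms_diff B A"
      unfolding a using R_carrier[OF AB] by (intro M.ms_diff_swap) simp_all
    then show "\<ominus>\<^bsub>Zring M\<^esub> a \<in> IR R" unfolding IR_ms_diff using R_sym[OF AB] by blast
  qed
qed

text \<open>\<open>I(\<R>)\<close> absorbs multiplication: \<open>(P - N)(A - B) = (PA + NB) - (PB + NA)\<close>, and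
  \<open>PA + NB \<equiv> PB + NA\<close> whenever \<open>A \<equiv> B\<close>.\<close>

lemma IR_mult_closed:
  assumes a: "a \<in> IR R" and x: "x \<in> carrier (Zring M)"
  shows "x \<otimes>\<^bsub>Zring M\<^esub> a \<in> IR R"
proof -
  obtain A B where AB: "(A,B) \<in> R" and a: "a = ms_diff A B" using a by (auto simp: IR_ms_diff)
  obtain P N where P: "set_mset P \<subseteq> carrier M" and N: "set_mset N \<subseteq> carrier M"
    and x: "x = ms_diff P N"
    using Zring_ms_diff_decomp[OF x] by blast
  have "(mset_mult M P A, mset_mult M P B) \<in> R" "(mset_mult M N B, mset_mult M N A) \<in> R"
    using R_add_mult[OF R_refl[OF P] AB] R_add_mult[OF R_refl[OF N] R_sym[OF AB]] by simp_all
  then have "(mset_mult M P A + mset_mult M N B, mset_mult M P B + mset_mult M N A) \<in> R"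
    using R_add_mult by blast
  moreover have "x \<otimes>\<^bsub>Zring M\<^esub> a
      = ms_diff (mset_mult M P A + mset_mult M N B) (mset_mult M P B + mset_mult M N A)"
    unfolding x a using P N R_carrier[OF AB] by (intro M.ms_diff_mult) simp_all
  ultimately show ?thesis unfolding IR_ms_diff by blast
qed

lemma IR_is_ideal: "ideal (IR R) (Zring M)"
proof -
  interpret Z: cring "Zring M" by (rule M.Zring_cring)
  show ?thesis
  proof (rule Z.ideal_by_closure[OF IR_subgroup IR_mult_closed])
    fix a x assume "a \<in> IR R" "x \<in> carrier (Zring M)"
    moreover have "a \<in> carrier (Zring M)" using \<open>a \<in> IR R\<close> additive_subgroup.a_subset[OF IR_subgroup] by blast
    ultimately show "a \<otimes>\<^bsub>Zring M\<^esub> x \<in> IR R" using IR_mult_closed Z.m_comm by metis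
  qed
qed

lemma piZ_eq: "piZ M R = (+>\<^bsub>Zring M\<^esub>) (IR R)"
  by (simp add: piZ_def fun_eq_iff)

lemma piZ_hom: "ring_hom_ring (Zring M) (BZ M R) (piZ M R)"
  unfolding piZ_eq BZ_def
  by (rule ideal.rcos_ring_hom_ring[OF IR_is_ideal])

lemma piZ_surj: "piZ M R ` carrier (Zring M) = carrier (BZ M R)"
  by (auto simp: piZ_eq BZ_def FactRing_def A_RCOSETS_def')

lemma piZ_kernel: "a_kernel (Zring M) (BZ M R) (piZ M R) = IR R"
proof -
  interpret Z: cring "Zring M" by (rule M.Zring_cring)
  show ?thesis
    using Z.rcos_eq_zero_iff[OF IR_is_ideal] ideal.Icarr[OF IR_is_ideal]
    by (auto simp: a_kernel_def' piZ_eq BZ_def)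
qed

lemma iZ_eq: "iZ M R a = piZ M R (ms_int {#a#})"
proof -
  have "(\<lambda>x. if x = a then 1 else 0) = ms_int {#a#}" by (auto simp: ms_int_def)
  then show ?thesis by (simp add: iZ_def)
qed

lemma finsum_iZ:
  assumes "\<And>k. k < n \<Longrightarrow> c k \<in> carrier M"
  shows "(\<Oplus>\<^bsub>BZ M R\<^esub> k\<in>{..<n}. iZ M R (c k)) = piZ M R (ms_int (mset (map c [0..<n])))"
proof -
  interpret Z: cring "Zring M" by (rule M.Zring_cring)
  interpret pi: ring_hom_ring "Zring M" "BZ M R" "piZ M R" by (rule piZ_hom)
  have "(\<Oplus>\<^bsub>Zring M\<^esub> k\<in>{..<n}. ms_int {#c k#}) = ms_int (mset (map c [0..<n]))"
    using assms
  proof (induction n)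
    case 0
    then show ?case by (simp add: ms_int_def Zring_zero)
  next
    case (Suc n)
    have "(\<Oplus>\<^bsub>Zring M\<^esub> k\<in>{..<Suc n}. ms_int {#c k#})
        = ms_int {#c n#} \<oplus>\<^bsub>Zring M\<^esub> (\<Oplus>\<^bsub>Zring M\<^esub> k\<in>{..<n}. ms_int {#c k#})"
      unfolding lessThan_Suc using Suc.prems by (intro Z.finsum_insert) (auto intro: ms_int_carrier)
    also have "\<dots> = ms_int (mset (map c [0..<Suc n]))"
      using Suc by (simp add: ms_int_add[symmetric])
    finally show ?case .
  qed
  moreover have "(\<Oplus>\<^bsub>BZ M R\<^esub> k\<in>{..<n}. iZ M R (c k))
      = piZ M R (\<Oplus>\<^bsub>Zring M\<^esub> k\<in>{..<n}. ms_int {#c k#})"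
    using assms by (simp add: iZ_eq ms_int_carrier Pi_def o_def)
  ultimately show ?thesis by simp
qed

lemma finsum_diff_iZ:
  assumes "\<And>k. k < n \<Longrightarrow> c k \<in> carrier M" "\<And>k. k < n \<Longrightarrow> d k \<in> carrier M"
  shows "(\<Oplus>\<^bsub>BZ M R\<^esub> k\<in>{..<n}. iZ M R (c k)) \<ominus>\<^bsub>BZ M R\<^esub> (\<Oplus>\<^bsub>BZ M R\<^esub> k\<in>{..<n}. iZ M R (d k))
    = piZ M R (ms_diff (mset (map c [0..<n])) (mset (map d [0..<n])))"
proof -
  interpret pi: ring_hom_ring "Zring M" "BZ M R" "piZ M R" by (rule piZ_hom)
  have "set_mset (mset (map c [0..<n])) \<subseteq> carrier M" "set_mset (mset (map d [0..<n])) \<subseteq> carrier M"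
    using assms by auto
  then show ?thesis
    by (simp add: finsum_iZ[OF assms(1)] finsum_iZ[OF assms(2)] M.ms_diff_eq_minus pi.hom_minus
        ms_int_carrier)
qed

lemma sum_diffs_eq:
  assumes P: "\<And>a b. P a b \<Longrightarrow> a \<in> carrier M \<and> b \<in> carrier M"
  shows "{(\<Oplus>\<^bsub>BZ M R\<^esub> k\<in>{..<n}. iZ M R (c k)) \<ominus>\<^bsub>BZ M R\<^esub> (\<Oplus>\<^bsub>BZ M R\<^esub> k\<in>{..<n}. iZ M R (d k))
          | (n::nat) c d. \<forall>k<n. P (c k) (d k)}
       = piZ M R ` lin_diffs P"
proof -
  have key: "(\<Oplus>\<^bsub>BZ M R\<^esub> k\<in>{..<n}. iZ M R (c k)) \<ominus>\<^bsub>BZ M R\<^esub> (\<Oplus>\<^bsub>BZ M R\<^esub> k\<in>{..<n}. iZ M R (d k))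
      = piZ M R (ms_diff (mset (map c [0..<n])) (mset (map d [0..<n])))"
    if "\<forall>k<n. P (c k) (d k)" for n c d
    using that P by (intro finsum_diff_iZ) auto
  show ?thesis
  proof
    show "{(\<Oplus>\<^bsub>BZ M R\<^esub> k\<in>{..<n}. iZ M R (c k)) \<ominus>\<^bsub>BZ M R\<^esub> (\<Oplus>\<^bsub>BZ M R\<^esub> k\<in>{..<n}. iZ M R (d k))
          | (n::nat) c d. \<forall>k<n. P (c k) (d k)} \<subseteq> piZ M R ` lin_diffs P"
    proof clarify
      fix n :: nat and c d assume cd: "\<forall>k<n. P (c k) (d k)"
      then have "list_all2 P (map c [0..<n]) (map d [0..<n])"
        by (simp add: list_all2_conv_all_nth)
      then show "(\<Oplus>\<^bsub>BZ M R\<^esub> k\<in>{..<n}. iZ M R (c k)) \<ominus>\<^bsub>BZ M R\<^esub> (\<Oplus>\<^bsub>BZ M R\<^esub> k\<in>{..<n}. iZ M R (d k))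
          \<in> piZ M R ` lin_diffs P"
        unfolding key[OF cd] lin_diffs_def by blast
    qed
    show "piZ M R ` lin_diffs P \<subseteq> {(\<Oplus>\<^bsub>BZ M R\<^esub> k\<in>{..<n}. iZ M R (c k)) \<ominus>\<^bsub>BZ M R\<^esub>
          (\<Oplus>\<^bsub>BZ M R\<^esub> k\<in>{..<n}. iZ M R (d k)) | (n::nat) c d. \<forall>k<n. P (c k) (d k)}"
    proof
      fix z assume "z \<in> piZ M R ` lin_diffs P"
      then obtain xs ys where l: "list_all2 P xs ys" and z: "z = piZ M R (ms_diff (mset xs) (mset ys))"
        unfolding lin_diffs_def by blast
      define n where "n = length xs"
      have len: "length ys = n" using l by (simp add: n_def list_all2_lengthD)
      have cd: "\<forall>k<n. P (xs ! k) (ys ! k)" using l by (simp add: list_all2_conv_all_nth n_def)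
      have "map ((!) xs) [0..<n] = xs" by (simp add: n_def map_nth)
      moreover have "map ((!) ys) [0..<n] = ys" using len by (metis map_nth)
      ultimately have "z = (\<Oplus>\<^bsub>BZ M R\<^esub> k\<in>{..<n}. iZ M R (xs ! k)) \<ominus>\<^bsub>BZ M R\<^esub> (\<Oplus>\<^bsub>BZ M R\<^esub> k\<in>{..<n}. iZ M R (ys ! k))"
        using key[OF cd] z by simp
      then show "z \<in> {(\<Oplus>\<^bsub>BZ M R\<^esub> k\<in>{..<n}. iZ M R (c k)) \<ominus>\<^bsub>BZ M R\<^esub>
          (\<Oplus>\<^bsub>BZ M R\<^esub> k\<in>{..<n}. iZ M R (d k)) | (n::nat) c d. \<forall>k<n. P (c k) (d k)}"
        using cd by blast
    qed
  qed
qed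

end

section \<open>A congruence on a blueprint\<close>

locale blueprint_cong = blueprint_Z +
  fixes r :: "('a \<times> 'a) set"
  assumes congruence: "bp_congruence M R r"
begin

abbreviation cls :: "'a \<Rightarrow> 'a set" where "cls a \<equiv> r `` {a}"
abbreviation QM :: "'a set monoid" where "QM \<equiv> quot_monoid M r"

lemma r_equiv: "equiv (carrier M) r"
  using congruence by (simp add: bp_congruence_def)

lemma r_carrier: "(a,b) \<in> r \<Longrightarrow> a \<in> carrier M \<and> b \<in> carrier M"
  using equiv_type[OF r_equiv] by blast

lemma cls_eq_iff: "a \<in> carrier M \<Longrightarrow> b \<in> carrier M \<Longrightarrow> cls a = cls b \<longleftrightarrow> (a,b) \<in> r"
  using eq_equiv_class_iff[OF r_equiv] by blast

text \<open>(C1) and (C2) together say that \<open>\<sim>\<close> is compatible with the multiplication of \<open>A\<close>: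
  \<open>a \<sim> a'\<close> and \<open>b \<sim> b'\<close> give \<open>ab \<sim>\<^sub>\<N> a'b'\<close> by (C1), hence \<open>ab \<sim> a'b'\<close> by (C2).\<close>

lemma r_mult:
  assumes "(a,a') \<in> r" "(b,b') \<in> r"
  shows "(a \<otimes>\<^bsub>M\<^esub> b, a' \<otimes>\<^bsub>M\<^esub> b') \<in> r"
proof -
  have single: "({#x#},{#y#}) \<in> lin_ext M r" if "(x,y) \<in> r" for x y
  proof -
    have "(mset [x], mset [y]) \<in> lin_ext M r"
      unfolding lin_ext_def using that r_carrier[OF that]
      by (intro subsetD[OF equiv_gen_base]) fastforce
    then show ?thesis by simp
  qed
  have "(mset_mult M {#a#} {#b#}, mset_mult M {#a'#} {#b'#}) \<in> lin_ext M r"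
    using congruence single[OF assms(1)] single[OF assms(2)]
    unfolding bp_congruence_def pre_addition_def by blast
  then have "({#a \<otimes>\<^bsub>M\<^esub> b#}, {#a' \<otimes>\<^bsub>M\<^esub> b'#}) \<in> sim_R M R r"
    unfolding sim_R_def by (intro subsetD[OF equiv_gen_base]) (simp add: mset_mult_def)
  moreover have "a \<otimes>\<^bsub>M\<^esub> b \<in> carrier M" "a' \<otimes>\<^bsub>M\<^esub> b' \<in> carrier M"
    using r_carrier[OF assms(1)] r_carrier[OF assms(2)] by auto
  ultimately show ?thesis
    using congruence unfolding bp_congruence_def by blast
qed

lemma QM_mult: "a \<in> carrier M \<Longrightarrow> b \<in> carrier M \<Longrightarrow> cls a \<otimes>\<^bsub>QM\<^esub> cls b = cls (a \<otimes>\<^bsub>M\<^esub> b)"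
proof -
  assume a: "a \<in> carrier M" and b: "b \<in> carrier M"
  have "r `` ((\<lambda>(x,y). x \<otimes>\<^bsub>M\<^esub> y) ` (cls a \<times> cls b)) = cls (a \<otimes>\<^bsub>M\<^esub> b)"
  proof
    show "r `` ((\<lambda>(x,y). x \<otimes>\<^bsub>M\<^esub> y) ` (cls a \<times> cls b)) \<subseteq> cls (a \<otimes>\<^bsub>M\<^esub> b)"
    proof clarify
      fix x y z assume "(a,x) \<in> r" "(b,y) \<in> r" "(x \<otimes>\<^bsub>M\<^esub> y, z) \<in> r"
      moreover have "trans r" using r_equiv by (simp add: equiv_def)
      ultimately show "(a \<otimes>\<^bsub>M\<^esub> b, z) \<in> r" by (meson r_mult transD)
    qed
    show "cls (a \<otimes>\<^bsub>M\<^esub> b) \<subseteq> r `` ((\<lambda>(x,y). x \<otimes>\<^bsub>M\<^esub> y) ` (cls a \<times> cls b))"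
      using equiv_class_self[OF r_equiv a] equiv_class_self[OF r_equiv b] by blast
  qed
  then show ?thesis by (simp add: quot_monoid_def)
qed

lemma QM_carrier: "carrier QM = carrier M // r"
  by (simp add: quot_monoid_def)

lemma QM_one: "\<one>\<^bsub>QM\<^esub> = cls \<one>\<^bsub>M\<^esub>"
  by (simp add: quot_monoid_def)

lemma cls_hom: "cls \<in> hom M QM"
  by (auto simp: hom_def QM_carrier QM_mult quotientI)

lemma cls_surj: "cls ` carrier M = carrier QM"
  by (auto simp: QM_carrier quotient_def)

lemma QM_comm_monoid: "comm_monoid QM"
proof (rule comm_monoidI)
  have elim: "\<And>Q. Q \<in> carrier QM \<Longrightarrow> \<exists>a\<in>carrier M. Q = cls a"
    by (auto simp: QM_carrier elim!: quotientE)
  fix x y z assume "x \<in> carrier QM" "y \<in> carrier QM" "z \<in> carrier QM"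
  then obtain a b c where "a \<in> carrier M" "b \<in> carrier M" "c \<in> carrier M"
    and "x = cls a" "y = cls b" "z = cls c"
    using elim by metis
  then show "x \<otimes>\<^bsub>QM\<^esub> y \<in> carrier QM" "x \<otimes>\<^bsub>QM\<^esub> y \<otimes>\<^bsub>QM\<^esub> z = x \<otimes>\<^bsub>QM\<^esub> (y \<otimes>\<^bsub>QM\<^esub> z)"
      "\<one>\<^bsub>QM\<^esub> \<otimes>\<^bsub>QM\<^esub> x = x" "x \<otimes>\<^bsub>QM\<^esub> y = y \<otimes>\<^bsub>QM\<^esub> x"
    by (simp_all add: QM_mult QM_one QM_carrier quotientI M.m_assoc) (simp add: M.m_comm)
qed (simp add: QM_one QM_carrier quotientI)

end

context blueprint_cong
begin

lemma zpush_eq_zmap: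
  assumes f: "f \<in> carrier (Zring M)"
  shows "zpush M r f = zmap cls f"
proof
  fix Q
  have supp: "{x. f x \<noteq> 0} \<subseteq> carrier M" using f by (simp add: Zring_carrier)
  show "zpush M r f Q = zmap cls f Q"
  proof (cases "Q \<in> carrier M // r")
    case True
    then obtain q where q: "q \<in> carrier M" "Q = cls q" by (rule quotientE)
    have "x \<in> Q \<longleftrightarrow> cls x = Q" if "x \<in> carrier M" for x
      using cls_eq_iff[OF q(1) that] q(2) by auto
    then have "{x \<in> Q. f x \<noteq> 0} = {x. f x \<noteq> 0 \<and> cls x = Q}"
      using supp by blast
    then show ?thesis using True by (simp add: zpush_def zmap_def)
  next
    case False
    have "cls x \<noteq> Q" if "f x \<noteq> 0" for x
      using that supp False quotientI[of x "carrier M" r] by auto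
    then have empty: "{x. f x \<noteq> 0 \<and> cls x = Q} = {}" by blast
    show ?thesis using False by (simp add: zpush_def zmap_def empty)
  qed
qed

lemma zpush_hom: "ring_hom_ring (Zring M) (Zring QM) (zpush M r)"
proof -
  interpret Z: cring "Zring M" by (rule M.Zring_cring)
  have "zmap cls \<in> ring_hom (Zring M) (Zring QM)"
    by (rule zmap_ring_hom[OF M.comm_monoid_axioms QM_comm_monoid cls_hom QM_one[symmetric]])
  then have "zpush M r \<in> ring_hom (Zring M) (Zring QM)"
    by (intro ring_hom_memI) (simp_all add: zpush_eq_zmap ring_hom_memE)
  then show ?thesis
    by (intro ring_hom_ringI2 cring.axioms(1) M.Zring_cring comm_monoid.Zring_cring[OF QM_comm_monoid])
qed

lemma zpush_surj: "zpush M r ` carrier (Zring M) = carrier (Zring QM)"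
  using zmap_surj[OF cls_surj] by (simp add: zpush_eq_zmap cong: image_cong)

lemma zpush_kernel: "a_kernel (Zring M) (Zring QM) (zpush M r) = lin_diffs (\<lambda>a b. (a,b) \<in> r)"
proof -
  have "a_kernel (Zring M) (Zring QM) (zpush M r) = a_kernel (Zring M) (Zring QM) (zmap cls)"
    by (auto simp: a_kernel_def' zpush_eq_zmap)
  also have "\<dots> = lin_diffs (\<lambda>a b. a \<in> carrier M \<and> b \<in> carrier M \<and> cls a = cls b)"
    by (rule zmap_kernel)
  also have "(\<lambda>a b. a \<in> carrier M \<and> b \<in> carrier M \<and> cls a = cls b) = (\<lambda>a b. (a,b) \<in> r)"
    using cls_eq_iff r_carrier by blast
  finally show ?thesis .
qed

lemma zpush_ms_diff:
  "set_mset P \<subseteq> carrier M \<Longrightarrow> set_mset N \<subseteq> carrier M \<Longrightarrow>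
    zpush M r (ms_diff P N) = ms_diff (image_mset cls P) (image_mset cls N)"
  by (simp add: zpush_eq_zmap ms_diff_carrier zmap_ms_diff)

section \<open>The ideal \<open>I\<^sub>\<int>(\<sim>)\<close>\<close>

lemma IZ_eq: "IZ M R r = piZ M R ` a_kernel (Zring M) (Zring QM) (zpush M r)"
proof -
  have "(\<lambda>a b. a \<in> carrier M \<and> b \<in> carrier M \<and> (a,b) \<in> r) = (\<lambda>a b. (a,b) \<in> r)"
    using r_carrier by blast
  then show ?thesis
    unfolding zpush_kernel IZ_def by (subst sum_diffs_eq) simp_all
qed

text \<open>First assertion: \<open>I\<^sub>\<int>(\<sim>)\<close> is an ideal, as the image of an ideal under the surjection \<open>i\<close>.\<close>

lemma IZ_ideal: "ideal (IZ M R r) (BZ M R)"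
  unfolding IZ_eq
  by (rule ring_hom_ring.ideal_image[OF piZ_hom piZ_surj ring_hom_ring.kernel_is_ideal[OF zpush_hom]])

end

section \<open>\<open>B\<^sub>\<int>\<close> of the quotient blueprint\<close>

context blueprint_cong
begin

abbreviation QR :: "('a set multiset \<times> 'a set multiset) set" where "QR \<equiv> quot_preadd M R r"

text \<open>\<open>I(\<R>/\<sim>)\<close> is the image of \<open>I(\<R>)\<close> in \<open>\<int>[A/\<sim>]\<close>: the image is an ideal, so the differences it
  contains form a pre-addition on \<open>A/\<sim>\<close>, which contains the generators of the quotient pre-addition.\<close>

lemma IR_quot: "IR QR = zpush M r ` IR R"
proof (rule equalityI)
  let ?K = "zpush M r ` IR R"
  have K: "ideal ?K (Zring QM)"
    by (rule ring_hom_ring.ideal_image[OF zpush_hom zpush_surj IR_is_ideal])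
  have gen: "ms_diff (image_mset cls A) (image_mset cls B) \<in> ?K" if "(A,B) \<in> R" for A B
  proof -
    have "ms_diff (image_mset cls A) (image_mset cls B) = zpush M r (ms_diff A B)"
      using R_carrier[OF that] by (simp add: zpush_ms_diff)
    moreover have "ms_diff A B \<in> IR R" using that by (auto simp: IR_ms_diff)
    ultimately show ?thesis by simp
  qed
  have "pre_addition QM (diff_rel QM ?K)"
    by (rule comm_monoid.diff_rel_pre_addition[OF QM_comm_monoid K])
  moreover have "{(image_mset cls A, image_mset cls B) | A B. (A,B) \<in> R} \<subseteq> diff_rel QM ?K"
  proof
    fix p assume "p \<in> {(image_mset cls A, image_mset cls B) | A B. (A,B) \<in> R}"
    then obtain A B where AB: "(A,B) \<in> R" and p: "p = (image_mset cls A, image_mset cls B)" by blast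
    show "p \<in> diff_rel QM ?K"
      using gen[OF AB] R_carrier[OF AB] unfolding p by (auto simp: diff_rel_def QM_carrier intro!: quotientI)
  qed
  ultimately have "QR \<subseteq> diff_rel QM ?K"
    unfolding quot_preadd_def by (intro Inter_lower) simp
  then show "IR QR \<subseteq> ?K" by (auto simp: IR_ms_diff diff_rel_def)
  show "?K \<subseteq> IR QR"
  proof clarify
    fix f assume "f \<in> IR R"
    then obtain A B where AB: "(A,B) \<in> R" and f: "f = ms_diff A B" by (auto simp: IR_ms_diff)
    have "(image_mset cls A, image_mset cls B) \<in> QR" using AB by (auto simp: quot_preadd_def)
    then show "zpush M r f \<in> IR QR"
      using R_carrier[OF AB] by (auto simp: f zpush_ms_diff IR_ms_diff)
  qed
qed

text \<open>Both \<open>\<int>[A] \<rightarrow> B\<^sub>\<int>/I\<^sub>\<int>(\<sim>)\<close> and \<open>\<int>[A] \<rightarrow> \<int>[A/\<sim>] \<rightarrow> (B/\<sim>)\<^sub>\<int>\<close> are surjective with kernel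
  \<open>ker(\<int>[A] \<rightarrow> B\<^sub>\<int>) + ker(\<int>[A] \<rightarrow> \<int>[A/\<sim>])\<close>; hence the two quotients are canonically isomorphic.\<close>

theorem quotient_iso:
  "\<exists>\<phi>. \<phi> \<in> ring_iso (BZ QM QR) (BZ M R Quot IZ M R r)
      \<and> (\<forall>f\<in>carrier (Zring M). \<phi> (piZ QM QR (zpush M r f)) = IZ M R r +>\<^bsub>BZ M R\<^esub> piZ M R f)"
proof -
  interpret pi: ring_hom_ring "Zring M" "BZ M R" "piZ M R" by (rule piZ_hom)
  interpret zp: ring_hom_ring "Zring M" "Zring QM" "zpush M r" by (rule zpush_hom)
  have J: "ideal (IR QR) (Zring QM)"
    unfolding IR_quot by (rule zp.ideal_image[OF zpush_surj IR_is_ideal])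
  have piQ: "piZ QM QR = (+>\<^bsub>Zring QM\<^esub>) (IR QR)" by (simp add: piZ_def fun_eq_iff)
  let ?h = "(+>\<^bsub>BZ M R\<^esub>) (IZ M R r) \<circ> piZ M R"
  let ?h' = "piZ QM QR \<circ> zpush M r"
  have h: "ring_hom_ring (Zring M) (BZ M R Quot IZ M R r) ?h"
    by (rule ring_hom_ring_comp[OF piZ_hom ideal.rcos_ring_hom_ring[OF IZ_ideal]])
  have h': "ring_hom_ring (Zring M) (BZ QM QR) ?h'"
    unfolding piQ BZ_def by (rule ring_hom_ring_comp[OF zpush_hom ideal.rcos_ring_hom_ring[OF J]])
  have surj: "?h ` carrier (Zring M) = carrier (BZ M R Quot IZ M R r)"
    unfolding image_comp[symmetric] piZ_surj by (rule rcos_surj)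
  have surj': "?h' ` carrier (Zring M) = carrier (BZ QM QR)"
    unfolding image_comp[symmetric] zpush_surj piQ BZ_def by (rule rcos_surj)
  have "?h f = \<zero>\<^bsub>BZ M R Quot IZ M R r\<^esub> \<longleftrightarrow> ?h' f = \<zero>\<^bsub>BZ QM QR\<^esub>" if f: "f \<in> carrier (Zring M)" for f
  proof -
    have "?h f = \<zero>\<^bsub>BZ M R Quot IZ M R r\<^esub> \<longleftrightarrow> piZ M R f \<in> piZ M R ` a_kernel (Zring M) (Zring QM) (zpush M r)"
      using f by (simp add: ring.rcos_eq_zero_iff[OF pi.S.ring_axioms IZ_ideal] IZ_eq[symmetric])
    also have "\<dots> \<longleftrightarrow> zpush M r f \<in> zpush M r ` a_kernel (Zring M) (BZ M R) (piZ M R)"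
      using kernel_image_transfer[OF piZ_hom zpush_hom f] kernel_image_transfer[OF zpush_hom piZ_hom f]
      by blast
    also have "\<dots> \<longleftrightarrow> zpush M r f \<in> IR QR" unfolding piZ_kernel IR_quot ..
    also have "\<dots> \<longleftrightarrow> ?h' f = \<zero>\<^bsub>BZ QM QR\<^esub>"
      using ring.rcos_eq_zero_iff[OF zp.S.ring_axioms J zp.hom_closed[OF f]] by (simp add: piQ BZ_def)
    finally show ?thesis .
  qed
  then have "a_kernel (Zring M) (BZ M R Quot IZ M R r) ?h = a_kernel (Zring M) (BZ QM QR) ?h'"
    unfolding a_kernel_def' by (intro Collect_cong) blast
  from iso_of_equal_kernels[OF h h' surj surj' this] show ?thesis unfolding comp_def .
qed

end

section \<open>The congruence defined by an ideal\<close>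

context blueprint_Z
begin

definition ideal_diffs :: "'a set \<Rightarrow> ('a \<Rightarrow> int) set" where
  "ideal_diffs I = lin_diffs (\<lambda>a b. a \<in> I \<and> b \<in> I) <+>\<^bsub>Zring M\<^esub> IR R"

lemma ideal_diffs_subgroup:
  assumes "I \<subseteq> carrier M"
  shows "additive_subgroup (ideal_diffs I) (Zring M)"
proof -
  interpret Z: cring "Zring M" by (rule M.Zring_cring)
  have "additive_subgroup (lin_diffs (\<lambda>a b. a \<in> I \<and> b \<in> I)) (Zring M)"
    by (rule M.lin_diffs_subgroup) (use assms in auto)
  then show ?thesis
    unfolding ideal_diffs_def
    by (rule Z.add_additive_subgroups[OF _ ideal.axioms(1)[OF IR_is_ideal]])
qed

lemma ideal_diffs_contains:
  assumes "I \<subseteq> carrier M"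
  shows "lin_diffs (\<lambda>a b. a \<in> I \<and> b \<in> I) \<subseteq> ideal_diffs I" "IR R \<subseteq> ideal_diffs I"
proof -
  interpret Z: cring "Zring M" by (rule M.Zring_cring)
  interpret IR: ideal "IR R" "Zring M" by (rule IR_is_ideal)
  have D: "lin_diffs (\<lambda>a b. a \<in> I \<and> b \<in> I) \<subseteq> carrier (Zring M)"
    using M.lin_diffs_subgroup[of "\<lambda>a b. a \<in> I \<and> b \<in> I"] assms additive_subgroup.a_subset by blast
  show "lin_diffs (\<lambda>a b. a \<in> I \<and> b \<in> I) \<subseteq> ideal_diffs I"
  proof
    fix d assume d: "d \<in> lin_diffs (\<lambda>a b. a \<in> I \<and> b \<in> I)"
    then have "d = d \<oplus>\<^bsub>Zring M\<^esub> \<zero>\<^bsub>Zring M\<^esub>" using D by auto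
    then show "d \<in> ideal_diffs I" unfolding ideal_diffs_def mem_set_add using d IR.zero_closed by blast
  qed
  show "IR R \<subseteq> ideal_diffs I"
  proof
    fix k assume k: "k \<in> IR R"
    then have "k = \<zero>\<^bsub>Zring M\<^esub> \<oplus>\<^bsub>Zring M\<^esub> k" using IR.Icarr by simp
    then show "k \<in> ideal_diffs I" unfolding ideal_diffs_def mem_set_add using k zero_in_lin_diffs by blast
  qed
qed

lemma piZ_ideal_diffs:
  assumes "I \<subseteq> carrier M"
  shows "piZ M R ` ideal_diffs I = piZ M R ` lin_diffs (\<lambda>a b. a \<in> I \<and> b \<in> I)"
proof
  interpret pi: ring_hom_ring "Zring M" "BZ M R" "piZ M R" by (rule piZ_hom)
  show "piZ M R ` ideal_diffs I \<subseteq> piZ M R ` lin_diffs (\<lambda>a b. a \<in> I \<and> b \<in> I)"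
  proof clarify
    fix f assume "f \<in> ideal_diffs I"
    then obtain d k where d: "d \<in> lin_diffs (\<lambda>a b. a \<in> I \<and> b \<in> I)" and k: "k \<in> IR R"
      and f: "f = d \<oplus>\<^bsub>Zring M\<^esub> k"
      unfolding ideal_diffs_def mem_set_add by blast
    have dc: "d \<in> carrier (Zring M)"
      using d ideal_diffs_contains[OF assms] ideal_diffs_subgroup[OF assms] additive_subgroup.a_subset
      by blast
    have "k \<in> a_kernel (Zring M) (BZ M R) (piZ M R)" using k by (simp only: piZ_kernel)
    then have "k \<in> carrier (Zring M)" and "piZ M R k = \<zero>\<^bsub>BZ M R\<^esub>"
      unfolding a_kernel_def' by simp_all
    then have "piZ M R f = piZ M R d" unfolding f using dc by simp
    then show "piZ M R f \<in> piZ M R ` lin_diffs (\<lambda>a b. a \<in> I \<and> b \<in> I)" using d by blast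
  qed
  show "piZ M R ` lin_diffs (\<lambda>a b. a \<in> I \<and> b \<in> I) \<subseteq> piZ M R ` ideal_diffs I"
    using ideal_diffs_contains(1)[OF assms] by (rule image_mono)
qed

text \<open>If \<open>x \<sim>\<^sub>I y\<close>, then \<open>x - y\<close> lies in \<open>ideal_diffs I\<close>: the relation "difference in \<open>ideal_diffs I\<close>"
  is an equivalence containing \<open>\<R>\<close> and the linear extension of \<open>\<sim>\<^sup>I\<close>, hence all chains defining \<open>\<sim>\<^sub>I\<close>.\<close>

lemma sim_low_diff:
  assumes I: "I \<subseteq> carrier M" and xy: "(x,y) \<in> sim_low M R I"
  shows "ms_diff {#x#} {#y#} \<in> ideal_diffs I"
proof -
  let ?H = "ideal_diffs I"
  let ?T = "diff_rel M ?H"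
  let ?L = "lin_ext M (sim_up (carrier M) I)"
  have H: "additive_subgroup ?H (Zring M)" by (rule ideal_diffs_subgroup[OF I])
  have trans: "trans ?T" using M.diff_rel_equiv[OF H] by (simp add: equiv_def)
  have RT: "R \<subseteq> ?T"
  proof clarify
    fix A B assume AB: "(A,B) \<in> R"
    then have "ms_diff A B \<in> ?H" using ideal_diffs_contains(2)[OF I] by (auto simp: IR_ms_diff)
    then show "(A,B) \<in> ?T" using R_carrier[OF AB] by (simp add: diff_rel_def)
  qed
  have "ms_diff {#a#} {#b#} \<in> ?H" if "(a,b) \<in> sim_up (carrier M) I" for a b
  proof (cases "a = b")
    case True
    then show ?thesis using additive_subgroup.zero_closed[OF H] by (simp add: ms_diff_self[where M=M])
  next
    case False
    then have "list_all2 (\<lambda>a b. a \<in> I \<and> b \<in> I) [a] [b]" using that by (simp add: sim_up_def)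
    then have "ms_diff (mset [a]) (mset [b]) \<in> lin_diffs (\<lambda>a b. a \<in> I \<and> b \<in> I)"
      unfolding lin_diffs_def by blast
    then show ?thesis using ideal_diffs_contains(1)[OF I] by auto
  qed
  then have LT: "?L \<subseteq> ?T" by (intro M.lin_ext_subset_diff_rel[OF H]) simp
  have "R O ?L \<subseteq> ?T" using RT LT trans by (blast dest: transD)
  then have "(R O ?L)\<^sup>+ \<subseteq> ?T" using trans by (metis trancl_id trancl_mono subsetI)
  then have "(R O ?L)\<^sup>+ O R \<subseteq> ?T" using RT trans by (blast dest: transD)
  moreover have "({#x#},{#y#}) \<in> (R O ?L)\<^sup>+ O R" using xy by (simp add: sim_low_def)
  ultimately show ?thesis by (auto simp: diff_rel_def)
qed

lemma ideal_pair_sim_low: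
  assumes "I \<subseteq> carrier M" "a \<in> I" "b \<in> I"
  shows "(a,b) \<in> sim_low M R I"
proof -
  have c: "a \<in> carrier M" "b \<in> carrier M" using assms by auto
  have "(mset [a], mset [b]) \<in> lin_ext M (sim_up (carrier M) I)"
    unfolding lin_ext_def using assms c
    by (intro subsetD[OF equiv_gen_base]) (fastforce simp: sim_up_def)
  moreover have "({#a#},{#a#}) \<in> R" "({#b#},{#b#}) \<in> R"
    using equiv_class_self[OF R_equiv] c by (simp_all add: NA_def)
  ultimately have "({#a#},{#b#}) \<in> (R O lin_ext M (sim_up (carrier M) I))\<^sup>+ O R" by auto
  then show ?thesis using c by (simp add: sim_low_def)
qed

theorem IZ_sim_low:
  assumes I: "I \<subseteq> carrier M"
  shows "IZ M R (sim_low M R I)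
    = {(\<Oplus>\<^bsub>BZ M R\<^esub> k\<in>{..<n}. iZ M R (c k)) \<ominus>\<^bsub>BZ M R\<^esub> (\<Oplus>\<^bsub>BZ M R\<^esub> k\<in>{..<n}. iZ M R (d k))
        | (n::nat) c d. \<forall>k<n. c k \<in> I \<and> d k \<in> I}"
proof -
  let ?D = "lin_diffs (\<lambda>a b. a \<in> I \<and> b \<in> I)"
  let ?Dr = "lin_diffs (\<lambda>a b. a \<in> carrier M \<and> b \<in> carrier M \<and> (a,b) \<in> sim_low M R I)"
  have sub: "?D \<subseteq> ?Dr" by (rule lin_diffs_mono) (use I ideal_pair_sim_low in auto)
  have sup: "?Dr \<subseteq> ideal_diffs I"
    by (rule lin_diffs_subset[OF ideal_diffs_subgroup[OF I]]) (use I sim_low_diff in auto)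
  have "piZ M R ` ?Dr = piZ M R ` ?D"
  proof (rule subset_antisym)
    show "piZ M R ` ?Dr \<subseteq> piZ M R ` ?D"
      using image_mono[OF sup, of "piZ M R"] unfolding piZ_ideal_diffs[OF I] .
    show "piZ M R ` ?D \<subseteq> piZ M R ` ?Dr" using sub by (rule image_mono)
  qed
  moreover have "IZ M R (sim_low M R I) = piZ M R ` ?Dr"
    unfolding IZ_def by (rule sum_diffs_eq) simp
  moreover have "piZ M R ` ?D
      = {(\<Oplus>\<^bsub>BZ M R\<^esub> k\<in>{..<n}. iZ M R (c k)) \<ominus>\<^bsub>BZ M R\<^esub> (\<Oplus>\<^bsub>BZ M R\<^esub> k\<in>{..<n}. iZ M R (d k))
        | (n::nat) c d. \<forall>k<n. c k \<in> I \<and> d k \<in> I}"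
    by (rule sum_diffs_eq[symmetric]) (use I in auto)
  ultimately show ?thesis by simp
qed

end

theorem mainTheorem12:
  fixes M :: "('a,'b) monoid_scheme"
    and R :: "('a multiset \<times> 'a multiset) set"
    and r :: "('a \<times> 'a) set"
  assumes "blueprint M R"
    and "bp_congruence M R r"
  shows "ideal (IZ M R r) (BZ M R)
    \<and> (\<exists>\<phi>. \<phi> \<in> ring_iso (BZ (quot_monoid M r) (quot_preadd M R r)) (BZ M R Quot IZ M R r)
          \<and> (\<forall>f\<in>carrier (Zring M).
               \<phi> (piZ (quot_monoid M r) (quot_preadd M R r) (zpush M r f))
               = IZ M R r +>\<^bsub>BZ M R\<^esub> piZ M R f))
    \<and> (\<forall>I. bp_ideal M R I \<and> r = sim_low M R I \<longrightarrow>
          IZ M R r = {(\<Oplus>\<^bsub>BZ M R\<^esub> k\<in>{..<n}. iZ M R (c k)) \<ominus>\<^bsub>BZ M R\<^esub> (\<Oplus>\<^bsub>BZ M R\<^esub> k\<in>{..<n}. iZ M R (d k))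
                      | (n::nat) c d. \<forall>k<n. c k \<in> I \<and> d k \<in> I})"
proof -
  interpret blueprint_cong M R r by unfold_locales (fact assms(1), fact assms(2))
  have "IZ M R r = {(\<Oplus>\<^bsub>BZ M R\<^esub> k\<in>{..<n}. iZ M R (c k)) \<ominus>\<^bsub>BZ M R\<^esub> (\<Oplus>\<^bsub>BZ M R\<^esub> k\<in>{..<n}. iZ M R (d k))
                      | (n::nat) c d. \<forall>k<n. c k \<in> I \<and> d k \<in> I}"
    if "bp_ideal M R I" "r = sim_low M R I" for I
    using IZ_sim_low[of I] that by (simp add: bp_ideal_def)
  then show ?thesis using IZ_ideal quotient_iso by blast
qed

end
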